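(* Let $(G_1,\prec_1),(G_2,\prec_2),(G_1',\prec_1'),(G_2',\prec_2')$ be POP-graphs such that the compositions below are defined and $(G_2,\prec_2)\circ(G_1,\prec_1)=(G_2',\prec_2')\circ(G_1',\prec_1')$. Then $(G_1,\prec_1)=(G_1',\prec_1')$ implies $(G_2,\prec_2)=(G_2',\prec_2')$, and $(G_2,\prec_2)=(G_2',\prec_2')$ implies $(G_1,\prec_1)=(G_1',\prec_1')$.
   Context: A progressive graph is a finite directed acyclic graph (parallel edges allowed) in which every source and every sink has degree one; degree-one vertices are boundary vertices. An input edge is an edge whose initial vertex is a boundary vertex; an output edge one whose terminal vertex is a boundary vertex. For edges write $e\to e'$ if $e\neq e'$ and there is a directed path whose first edge is $e$ and last edge is $e'$. A planar order on $G$ is a linear order $\prec$ on $E(G)$ such that (P1) $e_1\to e_2$ implies $e_1\prec e_2$; (P2) if $e_1\prec e_2\prec e_3$ and $e_1\to e_3$ then $e_1\to e_2$ or $e_2\to e_3$. A POP-graph is a progressive graph with a planar order. Equality of POP-graphs means isomorphism: bijections of vertices and of edges preserving incidence and direction of edges and the planar orders. Composition: let $(G_1,\prec_1)$, $(G_2,\prec_2)$ be POP-graphs, $G_1$ with output edges $o_1\prec_1\cdots\prec_1 o_n$ and $G_2$ with input edges $i_1\prec_2\cdots\prec_2 i_n$. The progressive graph $G_2\circ G_1$ is obtained from $G_1\sqcup G_2$ by deleting the sinks of $G_1$, the sources of $G_2$ and the edges $o_k,i_k$, and adding for each $k$ a new edge $\overline{e_k}$ from the initial vertex of $o_k$ to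 the terminal vertex of $i_k$. Let $Q_1=\{e\in E(G_1): e\prec_1 o_1\}$, $Q_k=\{e: o_{k-1}\prec_1 e\prec_1 o_k\}$ ($2\le k\le n$), $P_k=\{e\in E(G_2): i_k\prec_2 e\prec_2 i_{k+1}\}$ ($1\le k\le n-1$), $P_n=\{e: i_n\prec_2 e\}$. The order $\prec_2\circ\prec_1$ on $E(G_2\circ G_1)$ lists $Q_1,\{\overline{e_1}\},P_1,\dots,Q_n,\{\overline{e_n}\},P_n$ consecutively, each $Q_k$ ordered by $\prec_1$ and each $P_k$ by $\prec_2$; $(G_2,\prec_2)\circ(G_1,\prec_1):=(G_2\circ G_1,\prec_2\circ\prec_1)$. *)

theory Defs
  imports Main
begin

record ('v, 'e) pop =
  pverts :: "'v set"
  pedges :: "'e set"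
  psrc   :: "'e \<Rightarrow> 'v"
  ptgt   :: "'e \<Rightarrow> 'v"
  pprec  :: "'e \<Rightarrow> 'e \<Rightarrow> bool"

definition indeg :: "('v, 'e) pop \<Rightarrow> 'v \<Rightarrow> nat" where
  "indeg G v = card {e \<in> pedges G. ptgt G e = v}"

definition outdeg :: "('v, 'e) pop \<Rightarrow> 'v \<Rightarrow> nat" where
  "outdeg G v = card {e \<in> pedges G. psrc G e = v}"

definition degree :: "('v, 'e) pop \<Rightarrow> 'v \<Rightarrow> nat" where
  "degree G v = indeg G v + outdeg G v"

definition edge_step :: "('v, 'e) pop \<Rightarrow> ('e \<times> 'e) set" where
  "edge_step G = {(e, e'). e \<in> pedges G \<and> e' \<in> pedges G \<and> ptgt G e = psrc G e'}"

definition reach :: "('v, 'e) pop \<Rightarrow> 'e \<Rightarrow> 'e \<Rightarrow> bool" where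
  "reach G e e' \<longleftrightarrow> e \<noteq> e' \<and> (e, e') \<in> (edge_step G)\<^sup>+"

definition progressive :: "('v, 'e) pop \<Rightarrow> bool" where
  "progressive G \<longleftrightarrow>
     finite (pverts G) \<and> finite (pedges G) \<and>
     (\<forall>e \<in> pedges G. psrc G e \<in> pverts G \<and> ptgt G e \<in> pverts G) \<and>
     \<comment> \<open>acyclic: no directed cycle\<close>
     (\<forall>e \<in> pedges G. (e, e) \<notin> (edge_step G)\<^sup>+) \<and>
     \<comment> \<open>every source and every sink has degree one\<close>
     (\<forall>v \<in> pverts G. indeg G v = 0 \<longrightarrow> degree G v = 1) \<and>
     (\<forall>v \<in> pverts G. outdeg G v = 0 \<longrightarrow> degree G v = 1)"

definition boundary :: "('v, 'e) pop \<Rightarrow> 'v \<Rightarrow> bool" where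
  "boundary G v \<longleftrightarrow> v \<in> pverts G \<and> degree G v = 1"

definition inputs :: "('v, 'e) pop \<Rightarrow> 'e set" where
  "inputs G = {e \<in> pedges G. boundary G (psrc G e)}"

definition outputs :: "('v, 'e) pop \<Rightarrow> 'e set" where
  "outputs G = {e \<in> pedges G. boundary G (ptgt G e)}"

definition sources :: "('v, 'e) pop \<Rightarrow> 'v set" where
  "sources G = {v \<in> pverts G. indeg G v = 0}"

definition sinks :: "('v, 'e) pop \<Rightarrow> 'v set" where
  "sinks G = {v \<in> pverts G. outdeg G v = 0}"

definition planar_order :: "('v, 'e) pop \<Rightarrow> bool" where
  "planar_order G \<longleftrightarrow>
     (\<forall>e \<in> pedges G. \<not> pprec G e e) \<and>
     (\<forall>e1 \<in> pedges G. \<forall>e2 \<in> pedges G. \<forall>e3 \<in> pedges G.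
        pprec G e1 e2 \<longrightarrow> pprec G e2 e3 \<longrightarrow> pprec G e1 e3) \<and>
     (\<forall>e1 \<in> pedges G. \<forall>e2 \<in> pedges G. e1 \<noteq> e2 \<longrightarrow> pprec G e1 e2 \<or> pprec G e2 e1) \<and>
     (\<forall>e1 \<in> pedges G. \<forall>e2 \<in> pedges G. reach G e1 e2 \<longrightarrow> pprec G e1 e2) \<and>
     (\<forall>e1 \<in> pedges G. \<forall>e2 \<in> pedges G. \<forall>e3 \<in> pedges G.
        pprec G e1 e2 \<longrightarrow> pprec G e2 e3 \<longrightarrow> reach G e1 e3 \<longrightarrow>
        reach G e1 e2 \<or> reach G e2 e3)"

definition pop_graph :: "('v, 'e) pop \<Rightarrow> bool" where
  "pop_graph G \<longleftrightarrow> progressive G \<and> planar_order G"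

text \<open>Equality of POP-graphs = isomorphism (incidence, direction and planar order preserved).\<close>
definition pop_iso :: "('v, 'e) pop \<Rightarrow> ('w, 'f) pop \<Rightarrow> bool" where
  "pop_iso G H \<longleftrightarrow> (\<exists>fv fe.
     bij_betw fv (pverts G) (pverts H) \<and> bij_betw fe (pedges G) (pedges H) \<and>
     (\<forall>e \<in> pedges G. psrc H (fe e) = fv (psrc G e) \<and> ptgt H (fe e) = fv (ptgt G e)) \<and>
     (\<forall>e1 \<in> pedges G. \<forall>e2 \<in> pedges G. pprec G e1 e2 \<longleftrightarrow> pprec H (fe e1) (fe e2)))"

text \<open>Number of elements of S strictly preceding x: for an output (input) edge this is k-1
  when it is the k-th one, i.e. o_k / i_k.\<close>
definition rank :: "('v, 'e) pop \<Rightarrow> 'e set \<Rightarrow> 'e \<Rightarrow> nat" where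
  "rank G S x = card {y \<in> S. pprec G y x}"

definition composable :: "('v1, 'e1) pop \<Rightarrow> ('v2, 'e2) pop \<Rightarrow> bool" where
  "composable G1 G2 \<longleftrightarrow> card (outputs G1) = card (inputs G2)"

text \<open>Edges of the composite: old non-output edges of G1 (Inl (Inl e)), old non-input edges of
  G2 (Inl (Inr e)), and the new edges \<open>e_k\<close> represented as Inr (o_k, i_k).\<close>
type_synonym ('e1, 'e2) cedge = "('e1 + 'e2) + ('e1 \<times> 'e2)"

text \<open>Position key: Q_k (k \<ge> 1) gets 3(k-1), the new edge e_k gets 3(k-1)+1, P_k gets 3(k-1)+2.\<close>
fun comp_key :: "('v1, 'e1) pop \<Rightarrow> ('v2, 'e2) pop \<Rightarrow> ('e1, 'e2) cedge \<Rightarrow> nat" where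
  "comp_key G1 G2 (Inl (Inl e)) = 3 * rank G1 (outputs G1) e"
| "comp_key G1 G2 (Inr (oe, i)) = 3 * rank G1 (outputs G1) oe + 1"
| "comp_key G1 G2 (Inl (Inr e)) = 3 * (rank G2 (inputs G2) e - 1) + 2"

fun comp_prec :: "('v1, 'e1) pop \<Rightarrow> ('v2, 'e2) pop \<Rightarrow> ('e1, 'e2) cedge \<Rightarrow> ('e1, 'e2) cedge \<Rightarrow> bool" where
  "comp_prec G1 G2 (Inl (Inl e)) (Inl (Inl e')) =
     (comp_key G1 G2 (Inl (Inl e)) < comp_key G1 G2 (Inl (Inl e'))
      \<or> (comp_key G1 G2 (Inl (Inl e)) = comp_key G1 G2 (Inl (Inl e')) \<and> pprec G1 e e'))"
| "comp_prec G1 G2 (Inl (Inr e)) (Inl (Inr e')) =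
     (comp_key G1 G2 (Inl (Inr e)) < comp_key G1 G2 (Inl (Inr e'))
      \<or> (comp_key G1 G2 (Inl (Inr e)) = comp_key G1 G2 (Inl (Inr e')) \<and> pprec G2 e e'))"
| "comp_prec G1 G2 x y = (comp_key G1 G2 x < comp_key G1 G2 y)"

fun comp_src :: "('v1, 'e1) pop \<Rightarrow> ('v2, 'e2) pop \<Rightarrow> ('e1, 'e2) cedge \<Rightarrow> 'v1 + 'v2" where
  "comp_src G1 G2 (Inl (Inl e)) = Inl (psrc G1 e)"
| "comp_src G1 G2 (Inl (Inr e)) = Inr (psrc G2 e)"
| "comp_src G1 G2 (Inr (oe, i)) = Inl (psrc G1 oe)"

fun comp_tgt :: "('v1, 'e1) pop \<Rightarrow> ('v2, 'e2) pop \<Rightarrow> ('e1, 'e2) cedge \<Rightarrow> 'v1 + 'v2" where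
  "comp_tgt G1 G2 (Inl (Inl e)) = Inl (ptgt G1 e)"
| "comp_tgt G1 G2 (Inl (Inr e)) = Inr (ptgt G2 e)"
| "comp_tgt G1 G2 (Inr (oe, i)) = Inr (ptgt G2 i)"

text \<open>pop_comp G2 G1 is (G2, prec2) \<circ> (G1, prec1).\<close>
definition pop_comp :: "('v2, 'e2) pop \<Rightarrow> ('v1, 'e1) pop \<Rightarrow> ('v1 + 'v2, ('e1, 'e2) cedge) pop" where
  "pop_comp G2 G1 =
     \<lparr> pverts = Inl ` (pverts G1 - sinks G1) \<union> Inr ` (pverts G2 - sources G2),
       pedges = Inl ` Inl ` (pedges G1 - outputs G1) \<union> Inl ` Inr ` (pedges G2 - inputs G2)
                \<union> Inr ` {(oe, i). oe \<in> outputs G1 \<and> i \<in> inputs G2 \<and>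
                                 rank G1 (outputs G1) oe = rank G2 (inputs G2) i},
       psrc = comp_src G1 G2,
       ptgt = comp_tgt G1 G2,
       pprec = comp_prec G1 G2 \<rparr>"

end

theory Submission
  imports Defs
begin

text \<open>Every edge of the composite \<open>G\<^sub>2 \<circ> G\<^sub>1\<close> carries a key recording its place: \<open>3(k-1)\<close> on
  \<open>Q\<^sub>k\<close>, \<open>3(k-1)+1\<close> on the new edge \<open>e\<^sub>k\<close> and \<open>3(k-1)+2\<close> on \<open>P\<^sub>k\<close>, and the planar order of the
  composite compares keys first. The new edge \<open>e\<^sub>k\<close> reaches every edge of \<open>P\<^sub>k\<close>, by planarity
  every edge of \<open>Q\<^sub>k\<close> reaches \<open>e\<^sub>k\<close>, and new edges reach only edges of the blocks \<open>P\<close> and are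
  reached only from the blocks \<open>Q\<close>. An isomorphism of composites preserves order and
  reachability; if moreover the blocks \<open>Q\<^sub>k\<close> have the same sizes on both sides, which holds when
  \<open>G\<^sub>1 = G\<^sub>1'\<close>, these facts force it to preserve keys, as one sees at an edge of least key
  whose key is changed. Reading the order backwards, the same holds when \<open>G\<^sub>2 = G\<^sub>2'\<close>, with the
  blocks \<open>P\<^sub>k\<close> counted instead. A key-preserving isomorphism of composites restricts to
  isomorphisms of the factors: the edges of \<open>G\<^sub>1\<close> are those of key \<open>\<noteq> 2 (mod 3)\<close>, the new
  edges standing for its outputs, and dually for \<open>G\<^sub>2\<close>.\<close>

section \<open>Planar orders and ranks\<close>

lemma planar_order_irrefl: "planar_order G \<Longrightarrow> e \<in> pedges G \<Longrightarrow> \<not> pprec G e e"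
  unfolding planar_order_def by blast

lemma planar_order_trans:
  "planar_order G \<Longrightarrow> a \<in> pedges G \<Longrightarrow> b \<in> pedges G \<Longrightarrow> c \<in> pedges G \<Longrightarrow>
   pprec G a b \<Longrightarrow> pprec G b c \<Longrightarrow> pprec G a c"
  unfolding planar_order_def by blast

lemma planar_order_linear:
  "planar_order G \<Longrightarrow> a \<in> pedges G \<Longrightarrow> b \<in> pedges G \<Longrightarrow> a \<noteq> b \<Longrightarrow> pprec G a b \<or> pprec G b a"
  unfolding planar_order_def by blast

lemma reach_imp_prec:
  "planar_order G \<Longrightarrow> a \<in> pedges G \<Longrightarrow> b \<in> pedges G \<Longrightarrow> reach G a b \<Longrightarrow> pprec G a b"
  unfolding planar_order_def by blast

lemma planar_order_reach_between:
  "planar_order G \<Longrightarrow> a \<in> pedges G \<Longrightarrow> b \<in> pedges G \<Longrightarrow> c \<in> pedges G \<Longrightarrow>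
   pprec G a b \<Longrightarrow> pprec G b c \<Longrightarrow> reach G a c \<Longrightarrow> reach G a b \<or> reach G b c"
  unfolding planar_order_def by blast

lemma planar_order_not_prec_iff:
  assumes G: "planar_order G" and ab: "a \<in> pedges G" "b \<in> pedges G"
  shows "\<not> pprec G a b \<longleftrightarrow> a = b \<or> pprec G b a"
proof -
  have "\<not> (pprec G a b \<and> pprec G b a)"
    using planar_order_irrefl[OF G ab(1)] planar_order_trans[OF G ab(1,2,1)] by blast
  moreover have "\<not> pprec G a a" using planar_order_irrefl[OF G ab(1)] .
  ultimately show ?thesis using planar_order_linear[OF G ab] by blast
qed

locale planar_rank =
  fixes G :: "('v, 'e) pop" and S :: "'e set"
  assumes planar: "planar_order G" and finite_edges: "finite (pedges G)"
    and subset_edges: "S \<subseteq> pedges G"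
begin

lemma finite_prec_set: "finite {z \<in> S. pprec G z x}"
  using finite_edges subset_edges by (auto intro: finite_subset)

lemma rank_mono:
  assumes "x \<in> pedges G" "y \<in> pedges G" "pprec G x y"
  shows "rank G S x \<le> rank G S y"
  unfolding rank_def using assms planar_order_trans[OF planar] subset_edges
  by (intro card_mono[OF finite_prec_set]) blast

lemma prec_if_rank_less:
  assumes "x \<in> pedges G" "y \<in> pedges G" "rank G S x < rank G S y"
  shows "pprec G x y"
proof (rule ccontr)
  assume "\<not> pprec G x y"
  then have "x = y \<or> pprec G y x" using planar_order_not_prec_iff[OF planar assms(1,2)] by blast
  then have "rank G S y \<le> rank G S x" using rank_mono[OF assms(2,1)] by auto
  with assms(3) show False by simp
qed

lemma prec_iff_rank_less:
  assumes s: "s \<in> S" and x: "x \<in> pedges G"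
  shows "pprec G s x \<longleftrightarrow> rank G S s < rank G S x"
proof
  assume sx: "pprec G s x"
  have "{z \<in> S. pprec G z s} \<subset> {z \<in> S. pprec G z x}"
    using s x sx subset_edges planar_order_trans[OF planar] planar_order_irrefl[OF planar] by blast
  then show "rank G S s < rank G S x"
    unfolding rank_def by (rule psubset_card_mono[OF finite_prec_set])
next
  assume "rank G S s < rank G S x"
  then show "pprec G s x" using prec_if_rank_less s x subset_edges by blast
qed

lemma prec_iff_rank_le:
  assumes "s \<in> S" "x \<in> pedges G" "x \<noteq> s"
  shows "pprec G x s \<longleftrightarrow> rank G S x \<le> rank G S s"
  using planar_order_not_prec_iff[OF planar, of s x] prec_iff_rank_less[OF assms(1,2)] assms subset_edges
  by auto

lemma prec_iff_rank_lex:
  assumes "x \<in> pedges G" "y \<in> pedges G"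
  shows "pprec G x y \<longleftrightarrow> rank G S x < rank G S y \<or> rank G S x = rank G S y \<and> pprec G x y"
  using rank_mono[OF assms] prec_if_rank_less[OF assms] by auto

lemma rank_less_card:
  assumes "s \<in> S"
  shows "rank G S s < card S"
proof -
  have "{z \<in> S. pprec G z s} \<subset> S"
    using assms planar_order_irrefl[OF planar] subset_edges by blast
  moreover have "finite S" using finite_edges subset_edges by (rule finite_subset[rotated])
  ultimately show ?thesis unfolding rank_def by (rule psubset_card_mono[rotated])
qed

lemma inj_on_rank: "inj_on (rank G S) S"
proof (rule inj_onI, rule ccontr)
  fix a b assume ab: "a \<in> S" "b \<in> S" "rank G S a = rank G S b" "a \<noteq> b"
  then have "pprec G a b \<or> pprec G b a" using planar_order_linear[OF planar] subset_edges by blast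
  with ab show False using prec_iff_rank_less subset_edges by (metis less_irrefl subsetD)
qed

lemma bij_betw_rank: "bij_betw (rank G S) S {..<card S}"
proof -
  have "rank G S ` S \<subseteq> {..<card S}" using rank_less_card by auto
  moreover have "card (rank G S ` S) = card {..<card S}" using card_image[OF inj_on_rank] by simp
  ultimately have "rank G S ` S = {..<card S}" by (simp add: card_subset_eq)
  then show ?thesis using inj_on_rank unfolding bij_betw_def by simp
qed

end

section \<open>Progressive graphs\<close>

lemma progressive_finite_edges: "progressive G \<Longrightarrow> finite (pedges G)"
  unfolding progressive_def by blast

lemma progressive_edge_ends:
  "progressive G \<Longrightarrow> e \<in> pedges G \<Longrightarrow> psrc G e \<in> pverts G \<and> ptgt G e \<in> pverts G"
  unfolding progressive_def by blast

lemma edge_stepI: "a \<in> pedges G \<Longrightarrow> b \<in> pedges G \<Longrightarrow> ptgt G a = psrc G b \<Longrightarrow> (a, b) \<in> edge_step G"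
  unfolding edge_step_def by auto

lemma edge_stepD: "(a, b) \<in> edge_step G \<Longrightarrow> a \<in> pedges G \<and> b \<in> pedges G \<and> ptgt G a = psrc G b"
  unfolding edge_step_def by auto

lemma trancl_edge_step_edges: "(a, b) \<in> (edge_step G)\<^sup>+ \<Longrightarrow> a \<in> pedges G \<and> b \<in> pedges G"
  by (metis edge_stepD tranclD tranclD2)

lemma progressive_acyclic: "progressive G \<Longrightarrow> acyclic (edge_step G)"
  unfolding progressive_def acyclic_def using trancl_edge_step_edges by metis

lemma progressive_wf_edge_step:
  assumes "progressive G"
  shows "wf (edge_step G)" and "wf ((edge_step G)\<inverse>)"
proof -
  have "edge_step G \<subseteq> pedges G \<times> pedges G" by (auto simp: edge_step_def)
  then have "finite (edge_step G)"
    using progressive_finite_edges[OF assms] by (auto intro: finite_subset)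
  then show "wf (edge_step G)" "wf ((edge_step G)\<inverse>)"
    using progressive_acyclic[OF assms] by (simp_all add: finite_acyclic_wf acyclic_converse)
qed

lemma trancl_edge_step_imp_reach:
  "progressive G \<Longrightarrow> (a, b) \<in> (edge_step G)\<^sup>+ \<Longrightarrow> reach G a b"
  unfolding reach_def using progressive_acyclic acyclic_def by metis

lemma card_edge_set_pos:
  assumes "progressive G" "e \<in> pedges G" "P e"
  shows "card {d \<in> pedges G. P d} \<ge> 1"
proof -
  have "finite {d \<in> pedges G. P d}" using progressive_finite_edges[OF assms(1)] by simp
  moreover have "e \<in> {d \<in> pedges G. P d}" using assms(2,3) by simp
  ultimately show ?thesis by (metis One_nat_def Suc_leI card_gt_0_iff empty_iff)
qed

lemma outdeg_src_pos: "progressive G \<Longrightarrow> e \<in> pedges G \<Longrightarrow> outdeg G (psrc G e) \<ge> 1"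
  unfolding outdeg_def by (erule card_edge_set_pos) (assumption, rule refl)

lemma indeg_tgt_pos: "progressive G \<Longrightarrow> e \<in> pedges G \<Longrightarrow> indeg G (ptgt G e) \<ge> 1"
  unfolding indeg_def by (erule card_edge_set_pos) (assumption, rule refl)

lemma input_src_degrees:
  assumes "progressive G" "e \<in> inputs G"
  shows "indeg G (psrc G e) = 0" "outdeg G (psrc G e) = 1"
proof -
  have "degree G (psrc G e) = 1" "e \<in> pedges G" using assms(2) unfolding inputs_def boundary_def by auto
  moreover have "outdeg G (psrc G e) \<ge> 1" using outdeg_src_pos[OF assms(1) calculation(2)] .
  ultimately show "indeg G (psrc G e) = 0" "outdeg G (psrc G e) = 1" unfolding degree_def by auto
qed

lemma output_tgt_degrees:
  assumes "progressive G" "e \<in> outputs G"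
  shows "outdeg G (ptgt G e) = 0" "indeg G (ptgt G e) = 1"
proof -
  have "degree G (ptgt G e) = 1" "e \<in> pedges G" using assms(2) unfolding outputs_def boundary_def by auto
  moreover have "indeg G (ptgt G e) \<ge> 1" using indeg_tgt_pos[OF assms(1) calculation(2)] .
  ultimately show "outdeg G (ptgt G e) = 0" "indeg G (ptgt G e) = 1" unfolding degree_def by auto
qed

lemma input_unique_at_src:
  assumes "progressive G" "e \<in> inputs G" "d \<in> pedges G" "psrc G d = psrc G e"
  shows "d = e"
proof -
  have "card {x \<in> pedges G. psrc G x = psrc G e} = 1"
    using input_src_degrees(2)[OF assms(1,2)] unfolding outdeg_def .
  moreover have "e \<in> pedges G" using assms(2) unfolding inputs_def by simp
  ultimately show ?thesis using assms(3,4) by (metis (mono_tags, lifting) card_1_singletonE mem_Collect_eq singletonD)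
qed

lemma output_unique_at_tgt:
  assumes "progressive G" "e \<in> outputs G" "d \<in> pedges G" "ptgt G d = ptgt G e"
  shows "d = e"
proof -
  have "card {x \<in> pedges G. ptgt G x = ptgt G e} = 1"
    using output_tgt_degrees(2)[OF assms(1,2)] unfolding indeg_def .
  moreover have "e \<in> pedges G" using assms(2) unfolding outputs_def by simp
  ultimately show ?thesis using assms(3,4) by (metis (mono_tags, lifting) card_1_singletonE mem_Collect_eq singletonD)
qed

lemma input_src_no_in_edge:
  assumes "progressive G" "e \<in> inputs G" "d \<in> pedges G"
  shows "ptgt G d \<noteq> psrc G e"
  using input_src_degrees(1)[OF assms(1,2)] indeg_tgt_pos[OF assms(1,3)] by auto

lemma output_tgt_no_out_edge:
  assumes "progressive G" "e \<in> outputs G" "d \<in> pedges G"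
  shows "psrc G d \<noteq> ptgt G e"
  using output_tgt_degrees(1)[OF assms(1,2)] outdeg_src_pos[OF assms(1,3)] by auto

lemma src_notin_sinks: "progressive G \<Longrightarrow> e \<in> pedges G \<Longrightarrow> psrc G e \<notin> sinks G"
  unfolding sinks_def using outdeg_src_pos by fastforce

lemma tgt_notin_sources: "progressive G \<Longrightarrow> e \<in> pedges G \<Longrightarrow> ptgt G e \<notin> sources G"
  unfolding sources_def using indeg_tgt_pos by fastforce

lemma src_notin_sources:
  assumes "progressive G" "e \<in> pedges G" "e \<notin> inputs G"
  shows "psrc G e \<notin> sources G"
  using assms unfolding progressive_def sources_def inputs_def boundary_def by blast

lemma tgt_notin_sinks:
  assumes "progressive G" "e \<in> pedges G" "e \<notin> outputs G"
  shows "ptgt G e \<notin> sinks G"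
  using assms unfolding progressive_def sinks_def outputs_def boundary_def by blast

lemma trancl_edge_step_target_not_input:
  "progressive G \<Longrightarrow> (a, b) \<in> (edge_step G)\<^sup>+ \<Longrightarrow> b \<notin> inputs G"
  by (metis edge_stepD input_src_no_in_edge tranclD2)

lemma trancl_edge_step_source_not_output:
  "progressive G \<Longrightarrow> (a, b) \<in> (edge_step G)\<^sup>+ \<Longrightarrow> a \<notin> outputs G"
  by (metis edge_stepD output_tgt_no_out_edge tranclD)

lemma out_edge_exists:
  assumes G: "progressive G" and e: "e \<in> pedges G" "e \<notin> outputs G"
  obtains d where "d \<in> pedges G" "psrc G d = ptgt G e"
proof -
  have "outdeg G (ptgt G e) \<noteq> 0"
    using tgt_notin_sinks[OF G e] progressive_edge_ends[OF G e(1)] unfolding sinks_def by auto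
  then show ?thesis using that unfolding outdeg_def by (metis (mono_tags, lifting) card.empty empty_Collect_eq)
qed

lemma in_edge_exists:
  assumes G: "progressive G" and e: "e \<in> pedges G" "e \<notin> inputs G"
  obtains d where "d \<in> pedges G" "ptgt G d = psrc G e"
proof -
  have "indeg G (psrc G e) \<noteq> 0"
    using src_notin_sources[OF G e] progressive_edge_ends[OF G e(1)] unfolding sources_def by auto
  then show ?thesis using that unfolding indeg_def by (metis (mono_tags, lifting) card.empty empty_Collect_eq)
qed

lemma reaches_some_output:
  assumes G: "progressive G" and e: "e \<in> pedges G" "e \<notin> outputs G"
  shows "\<exists>oe \<in> outputs G. reach G e oe"
proof -
  let ?T = "{d. (e, d) \<in> (edge_step G)\<^sup>+}"
  obtain d where "d \<in> pedges G" "psrc G d = ptgt G e" using out_edge_exists[OF G e] .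
  then have "d \<in> ?T" using e by (simp add: edge_stepI r_into_trancl')
  with progressive_wf_edge_step(2)[OF G] obtain m
    where m: "m \<in> ?T" and last: "\<And>d. (m, d) \<in> edge_step G \<Longrightarrow> d \<notin> ?T"
    by (rule wfE_min) blast
  have mE: "m \<in> pedges G" using m trancl_edge_step_edges by fast
  have "m \<in> outputs G"
  proof (rule ccontr)
    assume "m \<notin> outputs G"
    then obtain d where "d \<in> pedges G" "psrc G d = ptgt G m" using out_edge_exists[OF G mE] by blast
    then have "(m, d) \<in> edge_step G" using mE by (simp add: edge_stepI)
    with m last show False by (meson mem_Collect_eq trancl_into_trancl)
  qed
  with m show ?thesis using trancl_edge_step_imp_reach[OF G] by blast
qed

lemma reached_from_some_input:
  assumes G: "progressive G" and e: "e \<in> pedges G" "e \<notin> inputs G"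
  shows "\<exists>i \<in> inputs G. reach G i e"
proof -
  let ?T = "{d. (d, e) \<in> (edge_step G)\<^sup>+}"
  obtain d where "d \<in> pedges G" "ptgt G d = psrc G e" using in_edge_exists[OF G e] .
  then have "d \<in> ?T" using e by (auto intro: edge_stepI)
  with progressive_wf_edge_step(1)[OF G] obtain m
    where m: "m \<in> ?T" and first: "\<And>d. (d, m) \<in> edge_step G \<Longrightarrow> d \<notin> ?T"
    by (rule wfE_min) blast
  have mE: "m \<in> pedges G" using m trancl_edge_step_edges by fast
  have "m \<in> inputs G"
  proof (rule ccontr)
    assume "m \<notin> inputs G"
    then obtain d where "d \<in> pedges G" "ptgt G d = psrc G m" using in_edge_exists[OF G mE] by blast
    then have "(d, m) \<in> edge_step G" using mE by (auto intro: edge_stepI)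
    with m first show False by (meson mem_Collect_eq trancl_into_trancl2)
  qed
  with m show ?thesis using trancl_edge_step_imp_reach[OF G] by blast
qed

lemma vertex_is_endpoint:
  assumes "progressive G" "v \<in> pverts G"
  shows "\<exists>e \<in> pedges G. psrc G e = v \<or> ptgt G e = v"
proof (cases "indeg G v = 0")
  case True
  then have "outdeg G v \<noteq> 0" using assms unfolding progressive_def degree_def by auto
  then show ?thesis unfolding outdeg_def by (metis (mono_tags, lifting) card.empty empty_Collect_eq)
next
  case False
  then show ?thesis unfolding indeg_def by (metis (mono_tags, lifting) card.empty empty_Collect_eq)
qed


section \<open>Isomorphisms\<close>

lemma bij_betw_trancl_iff:
  assumes f: "bij_betw f A B" and r: "r \<subseteq> A \<times> A" and s: "s \<subseteq> B \<times> B"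
    and rs: "\<And>x y. x \<in> A \<Longrightarrow> y \<in> A \<Longrightarrow> (f x, f y) \<in> s \<longleftrightarrow> (x, y) \<in> r"
    and x: "x \<in> A" and y: "y \<in> A"
  shows "(f x, f y) \<in> s\<^sup>+ \<longleftrightarrow> (x, y) \<in> r\<^sup>+"
proof
  assume "(x, y) \<in> r\<^sup>+"
  then show "(f x, f y) \<in> s\<^sup>+"
  proof (induction rule: trancl_induct)
    case (base z)
    then show ?case using r rs x by blast
  next
    case (step z w)
    then have "(f z, f w) \<in> s" using r rs by blast
    with step.IH show ?case by (rule trancl_into_trancl)
  qed
next
  have lift: "\<exists>z \<in> A. v = f z \<and> (x, z) \<in> r\<^sup>+" if "(f x, v) \<in> s\<^sup>+" for v
    using that
  proof (induction rule: trancl_induct)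
    case (base v)
    then obtain z where "z \<in> A" "v = f z" using s f by (auto simp: bij_betw_def)
    then show ?case using base rs x by blast
  next
    case (step w v)
    then obtain z where z: "z \<in> A" "w = f z" "(x, z) \<in> r\<^sup>+" by blast
    obtain z' where z': "z' \<in> A" "v = f z'" using step s f by (auto simp: bij_betw_def)
    then have "(z, z') \<in> r" using rs z step by blast
    then have "(x, z') \<in> r\<^sup>+" using z(3) by (rule trancl_into_trancl[rotated])
    then show ?case using z' by blast
  qed
  assume "(f x, f y) \<in> s\<^sup>+"
  then obtain z where "z \<in> A" "f y = f z" "(x, z) \<in> r\<^sup>+" using lift by blast
  then show "(x, y) \<in> r\<^sup>+" using f y by (metis bij_betw_def inj_on_eq_iff)
qed

locale pop_isomorphism =
  fixes G :: "('v, 'e) pop" and H :: "('w, 'f) pop" and fv :: "'v \<Rightarrow> 'w" and fe :: "'e \<Rightarrow> 'f"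
  assumes bij_verts: "bij_betw fv (pverts G) (pverts H)"
    and bij_edges: "bij_betw fe (pedges G) (pedges H)"
    and incidence: "\<And>e. e \<in> pedges G \<Longrightarrow> psrc H (fe e) = fv (psrc G e) \<and> ptgt H (fe e) = fv (ptgt G e)"
    and prec_iff: "\<And>e1 e2. e1 \<in> pedges G \<Longrightarrow> e2 \<in> pedges G \<Longrightarrow> pprec H (fe e1) (fe e2) \<longleftrightarrow> pprec G e1 e2"
    and ends: "\<And>e. e \<in> pedges G \<Longrightarrow> psrc G e \<in> pverts G \<and> ptgt G e \<in> pverts G"
begin

lemma edge_in_image: "e \<in> pedges G \<Longrightarrow> fe e \<in> pedges H"
  using bij_edges by (meson bij_betwE)

lemma edge_eq_iff: "e \<in> pedges G \<Longrightarrow> d \<in> pedges G \<Longrightarrow> fe e = fe d \<longleftrightarrow> e = d"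
  using bij_edges by (metis bij_betw_def inj_on_eq_iff)

lemma vert_eq_iff: "u \<in> pverts G \<Longrightarrow> w \<in> pverts G \<Longrightarrow> fv u = fv w \<longleftrightarrow> u = w"
  using bij_verts by (metis bij_betw_def inj_on_eq_iff)

lemma edge_preimage: "e' \<in> pedges H \<Longrightarrow> \<exists>e \<in> pedges G. e' = fe e"
  using bij_edges by (metis bij_betw_def imageE)

lemma src_eq_src_iff: "e \<in> pedges G \<Longrightarrow> d \<in> pedges G \<Longrightarrow>
    psrc H (fe e) = psrc H (fe d) \<longleftrightarrow> psrc G e = psrc G d"
  using incidence ends vert_eq_iff by metis

lemma tgt_eq_tgt_iff: "e \<in> pedges G \<Longrightarrow> d \<in> pedges G \<Longrightarrow>
    ptgt H (fe e) = ptgt H (fe d) \<longleftrightarrow> ptgt G e = ptgt G d"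
  using incidence ends vert_eq_iff by metis

lemma tgt_eq_src_iff: "e \<in> pedges G \<Longrightarrow> d \<in> pedges G \<Longrightarrow>
    ptgt H (fe e) = psrc H (fe d) \<longleftrightarrow> ptgt G e = psrc G d"
  using incidence ends vert_eq_iff by metis

lemma reach_iff:
  assumes "e \<in> pedges G" "d \<in> pedges G"
  shows "reach H (fe e) (fe d) \<longleftrightarrow> reach G e d"
proof -
  have "(fe e, fe d) \<in> (edge_step H)\<^sup>+ \<longleftrightarrow> (e, d) \<in> (edge_step G)\<^sup>+"
    using assms tgt_eq_src_iff edge_in_image
    by (intro bij_betw_trancl_iff[OF bij_edges]) (auto simp: edge_step_def)
  then show ?thesis unfolding reach_def using edge_eq_iff assms by blast
qed

lemma card_edge_set_eq:
  assumes "\<And>e. e \<in> pedges G \<Longrightarrow> Q (fe e) \<longleftrightarrow> P e"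
  shows "card {e' \<in> pedges H. Q e'} = card {e \<in> pedges G. P e}"
proof -
  have "{e' \<in> pedges H. Q e'} = fe ` {e \<in> pedges G. P e}"
    using assms edge_in_image edge_preimage by fastforce
  moreover have "inj_on fe {e \<in> pedges G. P e}"
    using bij_edges by (auto simp: bij_betw_def intro: inj_on_subset)
  ultimately show ?thesis by (simp add: card_image)
qed

lemma indeg_eq: "v \<in> pverts G \<Longrightarrow> indeg H (fv v) = indeg G v"
  unfolding indeg_def using incidence ends vert_eq_iff by (intro card_edge_set_eq) metis

lemma outdeg_eq: "v \<in> pverts G \<Longrightarrow> outdeg H (fv v) = outdeg G v"
  unfolding outdeg_def using incidence ends vert_eq_iff by (intro card_edge_set_eq) metis

lemma boundary_iff: "v \<in> pverts G \<Longrightarrow> boundary H (fv v) \<longleftrightarrow> boundary G v"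
  unfolding boundary_def degree_def using indeg_eq outdeg_eq bij_verts by (auto dest: bij_betwE)

lemma output_iff: "e \<in> pedges G \<Longrightarrow> fe e \<in> outputs H \<longleftrightarrow> e \<in> outputs G"
  unfolding outputs_def using incidence boundary_iff ends edge_in_image by auto

lemma input_iff: "e \<in> pedges G \<Longrightarrow> fe e \<in> inputs H \<longleftrightarrow> e \<in> inputs G"
  unfolding inputs_def using incidence boundary_iff ends edge_in_image by auto

lemma card_outputs: "card (outputs H) = card (outputs G)"
  using card_edge_set_eq[of "\<lambda>e. e \<in> outputs H" "\<lambda>e. e \<in> outputs G"] output_iff
  by (simp add: outputs_def)

lemma card_inputs: "card (inputs H) = card (inputs G)"
  using card_edge_set_eq[of "\<lambda>e. e \<in> inputs H" "\<lambda>e. e \<in> inputs G"] input_iff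
  by (simp add: inputs_def)

lemma rank_eq:
  assumes "S \<subseteq> pedges G" "e \<in> pedges G"
  shows "rank H (fe ` S) (fe e) = rank G S e"
proof -
  have "{y \<in> fe ` S. pprec H y (fe e)} = fe ` {y \<in> S. pprec G y e}"
    using prec_iff assms by auto
  moreover have "inj_on fe {y \<in> S. pprec G y e}"
    using bij_edges assms(1) by (auto simp: bij_betw_def intro: inj_on_subset)
  ultimately show ?thesis unfolding rank_def by (simp add: card_image)
qed

lemma outputs_image: "fe ` outputs G = outputs H"
  using output_iff edge_preimage edge_in_image unfolding outputs_def by blast

lemma inputs_image: "fe ` inputs G = inputs H"
  using input_iff edge_preimage edge_in_image unfolding inputs_def by blast

lemma output_rank_eq: "e \<in> pedges G \<Longrightarrow> rank H (outputs H) (fe e) = rank G (outputs G) e"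
  using rank_eq[of "outputs G" e] outputs_image by (auto simp: outputs_def)

lemma input_rank_eq: "e \<in> pedges G \<Longrightarrow> rank H (inputs H) (fe e) = rank G (inputs G) e"
  using rank_eq[of "inputs G" e] inputs_image by (auto simp: inputs_def)

end

lemma pop_isoE:
  assumes "pop_iso G H" "\<And>e. e \<in> pedges G \<Longrightarrow> psrc G e \<in> pverts G \<and> ptgt G e \<in> pverts G"
  obtains fv fe where "pop_isomorphism G H fv fe"
proof -
  obtain fv fe where "bij_betw fv (pverts G) (pverts H)" "bij_betw fe (pedges G) (pedges H)"
    "\<forall>e \<in> pedges G. psrc H (fe e) = fv (psrc G e) \<and> ptgt H (fe e) = fv (ptgt G e)"
    "\<forall>e1 \<in> pedges G. \<forall>e2 \<in> pedges G. pprec G e1 e2 \<longleftrightarrow> pprec H (fe e1) (fe e2)"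
    using assms(1) unfolding pop_iso_def by blast
  then have "pop_isomorphism G H fv fe"
    using assms(2) by unfold_locales auto
  then show ?thesis by (rule that)
qed

text \<open>Every vertex of a progressive graph is an endpoint of some edge, so a map of edges that
  respects the incidences determines the map of vertices.\<close>

lemma vertex_map_from_edge_map:
  assumes tgt_tgt: "\<And>e d. e \<in> pedges G \<Longrightarrow> d \<in> pedges G \<Longrightarrow>
        ptgt G e = ptgt G d \<Longrightarrow> ptgt H (f e) = ptgt H (f d)"
    and src_src: "\<And>e d. e \<in> pedges G \<Longrightarrow> d \<in> pedges G \<Longrightarrow>
        psrc G e = psrc G d \<Longrightarrow> psrc H (f e) = psrc H (f d)"
    and tgt_src: "\<And>e d. e \<in> pedges G \<Longrightarrow> d \<in> pedges G \<Longrightarrow>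
        ptgt G e = psrc G d \<Longrightarrow> ptgt H (f e) = psrc H (f d)"
  obtains fv where "\<And>e. e \<in> pedges G \<Longrightarrow> fv (psrc G e) = psrc H (f e)"
    and "\<And>e. e \<in> pedges G \<Longrightarrow> fv (ptgt G e) = ptgt H (f e)"
proof -
  define some_edge where "some_edge P = (SOME e. e \<in> pedges G \<and> P e)" for P
  have some_edge: "some_edge P \<in> pedges G \<and> P (some_edge P)" if "e \<in> pedges G" "P e" for P e
    unfolding some_edge_def by (rule someI[of "\<lambda>e. e \<in> pedges G \<and> P e" e]) (use that in blast)
  define fv where "fv v = (if \<exists>e \<in> pedges G. psrc G e = v
      then psrc H (f (some_edge (\<lambda>e. psrc G e = v)))
      else ptgt H (f (some_edge (\<lambda>e. ptgt G e = v))))" for v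
  have fv_src: "fv (psrc G e) = psrc H (f e)" if e: "e \<in> pedges G" for e
  proof -
    let ?d = "some_edge (\<lambda>d. psrc G d = psrc G e)"
    have "?d \<in> pedges G \<and> psrc G ?d = psrc G e" by (rule some_edge[OF e]) simp
    moreover have "fv (psrc G e) = psrc H (f ?d)" unfolding fv_def using e by auto
    ultimately show ?thesis using src_src[of ?d e] e by simp
  qed
  have fv_tgt: "fv (ptgt G e) = ptgt H (f e)" if e: "e \<in> pedges G" for e
  proof (cases "\<exists>d \<in> pedges G. psrc G d = ptgt G e")
    case True
    let ?d = "some_edge (\<lambda>d. psrc G d = ptgt G e)"
    obtain d where "d \<in> pedges G" "psrc G d = ptgt G e" using True by blast
    then have "?d \<in> pedges G \<and> psrc G ?d = ptgt G e" by (rule some_edge)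
    moreover have "fv (ptgt G e) = psrc H (f ?d)" unfolding fv_def using True by simp
    ultimately show ?thesis using tgt_src[OF e, of ?d] by simp
  next
    case False
    let ?d = "some_edge (\<lambda>d. ptgt G d = ptgt G e)"
    have "?d \<in> pedges G \<and> ptgt G ?d = ptgt G e" by (rule some_edge[OF e]) simp
    moreover have "fv (ptgt G e) = ptgt H (f ?d)" unfolding fv_def using False by simp
    ultimately show ?thesis using tgt_tgt[of ?d e] e by simp
  qed
  from fv_src fv_tgt show thesis by (rule that)
qed

lemma pop_iso_from_edge_bij:
  assumes G: "progressive G" and H: "progressive H"
    and f: "bij_betw f (pedges G) (pedges H)"
    and src_src: "\<And>e d. e \<in> pedges G \<Longrightarrow> d \<in> pedges G \<Longrightarrow>
        psrc H (f e) = psrc H (f d) \<longleftrightarrow> psrc G e = psrc G d"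
    and tgt_tgt: "\<And>e d. e \<in> pedges G \<Longrightarrow> d \<in> pedges G \<Longrightarrow>
        ptgt H (f e) = ptgt H (f d) \<longleftrightarrow> ptgt G e = ptgt G d"
    and tgt_src: "\<And>e d. e \<in> pedges G \<Longrightarrow> d \<in> pedges G \<Longrightarrow>
        ptgt H (f e) = psrc H (f d) \<longleftrightarrow> ptgt G e = psrc G d"
    and prec: "\<And>e d. e \<in> pedges G \<Longrightarrow> d \<in> pedges G \<Longrightarrow>
        pprec H (f e) (f d) \<longleftrightarrow> pprec G e d"
  shows "pop_iso G H"
proof -
  obtain fv where fv_src: "\<And>e. e \<in> pedges G \<Longrightarrow> fv (psrc G e) = psrc H (f e)"
    and fv_tgt: "\<And>e. e \<in> pedges G \<Longrightarrow> fv (ptgt G e) = ptgt H (f e)"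
    by (rule vertex_map_from_edge_map[where G = G and H = H and f = f]) (use src_src tgt_tgt tgt_src in blast)+
  have f_edges: "\<And>e. e \<in> pedges G \<Longrightarrow> f e \<in> pedges H" using f by (meson bij_betwE)
  have endpoint: "\<exists>e \<in> pedges G. (v = psrc G e \<and> fv v = psrc H (f e)) \<or> (v = ptgt G e \<and> fv v = ptgt H (f e))"
    if v: "v \<in> pverts G" for v
  proof -
    obtain e where "e \<in> pedges G" "psrc G e = v \<or> ptgt G e = v" using vertex_is_endpoint[OF G v] by blast
    then show ?thesis using fv_src fv_tgt by blast
  qed
  have "inj_on fv (pverts G)"
  proof (rule inj_onI)
    fix v w assume v: "v \<in> pverts G" and w: "w \<in> pverts G" and eq: "fv v = fv w"
    obtain e where e: "e \<in> pedges G"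
      and ve: "(v = psrc G e \<and> fv v = psrc H (f e)) \<or> (v = ptgt G e \<and> fv v = ptgt H (f e))"
      using endpoint[OF v] by blast
    obtain d where d: "d \<in> pedges G"
      and wd: "(w = psrc G d \<and> fv w = psrc H (f d)) \<or> (w = ptgt G d \<and> fv w = ptgt H (f d))"
      using endpoint[OF w] by blast
    from ve wd eq show "v = w"
      using src_src[OF e d] tgt_tgt[OF e d] tgt_src[OF e d] tgt_src[OF d e] by auto
  qed
  moreover have "fv ` pverts G = pverts H"
  proof (intro equalityI subsetI)
    fix w assume "w \<in> fv ` pverts G"
    then obtain v where "v \<in> pverts G" "w = fv v" by blast
    then show "w \<in> pverts H"
      using endpoint f_edges progressive_edge_ends[OF H] by metis
  next
    fix w assume "w \<in> pverts H"
    then obtain e' where "e' \<in> pedges H" "psrc H e' = w \<or> ptgt H e' = w"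
      using vertex_is_endpoint[OF H] by blast
    then obtain e where "e \<in> pedges G" "psrc H (f e) = w \<or> ptgt H (f e) = w"
      using f by (metis bij_betw_def imageE)
    then show "w \<in> fv ` pverts G" using fv_src fv_tgt progressive_edge_ends[OF G] by (metis imageI)
  qed
  ultimately show ?thesis
    unfolding pop_iso_def bij_betw_def
    by (intro exI[of _ fv] exI[of _ f] conjI) (use f fv_src fv_tgt prec in \<open>auto simp: bij_betw_def\<close>)
qed

text \<open>The factors of a composite are recovered in this form, their edges being encoded by sets
  \<open>S\<close>, \<open>T\<close> of edges of the composites.\<close>

lemma pop_iso_from_encodings:
  assumes G: "progressive G" and H: "progressive H"
    and p: "bij_betw p S (pedges G)" and q: "bij_betw q T (pedges H)" and h: "bij_betw h S T"
    and src_src: "\<And>x y. x \<in> S \<Longrightarrow> y \<in> S \<Longrightarrow>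
        psrc H (q (h x)) = psrc H (q (h y)) \<longleftrightarrow> psrc G (p x) = psrc G (p y)"
    and tgt_tgt: "\<And>x y. x \<in> S \<Longrightarrow> y \<in> S \<Longrightarrow>
        ptgt H (q (h x)) = ptgt H (q (h y)) \<longleftrightarrow> ptgt G (p x) = ptgt G (p y)"
    and tgt_src: "\<And>x y. x \<in> S \<Longrightarrow> y \<in> S \<Longrightarrow>
        ptgt H (q (h x)) = psrc H (q (h y)) \<longleftrightarrow> ptgt G (p x) = psrc G (p y)"
    and prec: "\<And>x y. x \<in> S \<Longrightarrow> y \<in> S \<Longrightarrow>
        pprec H (q (h x)) (q (h y)) \<longleftrightarrow> pprec G (p x) (p y)"
  shows "pop_iso G H"
proof -
  let ?g = "inv_into S p"
  have g: "bij_betw ?g (pedges G) S" by (rule bij_betw_inv_into[OF p])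
  have pg: "p (?g e) = e" if "e \<in> pedges G" for e using p that by (meson bij_betw_inv_into_right)
  have gS: "?g e \<in> S" if "e \<in> pedges G" for e using g that by (meson bij_betwE)
  show ?thesis
  proof (rule pop_iso_from_edge_bij[OF G H])
    show "bij_betw (q \<circ> h \<circ> ?g) (pedges G) (pedges H)"
      using bij_betw_trans[OF g bij_betw_trans[OF h q]] by (simp add: comp_assoc)
  qed (use src_src[OF gS gS] tgt_tgt[OF gS gS] tgt_src[OF gS gS] prec[OF gS gS] pg in simp_all)
qed


section \<open>Orders divided into blocks\<close>

text \<open>Keys \<open>3 j\<close> and \<open>3 j + 2\<close> form the blocks before and after the single link element of
  key \<open>3 j + 1\<close>; the relation \<open>R\<close> connects each link with the whole blocks next to it, and
  links only with upper blocks after them and lower blocks before them. In a composite \<open>G\<^sub>2 \<circ> G\<^sub>1\<close> the blocks are the \<open>Q\<^sub>k\<close> and \<open>P\<^sub>k\<close>, the links the new edges,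
  and \<open>R\<close> is reachability.\<close>

locale block_order =
  fixes X :: "'a set" and lt :: "'a \<Rightarrow> 'a \<Rightarrow> bool" and R :: "'a \<Rightarrow> 'a \<Rightarrow> bool"
    and k :: "'a \<Rightarrow> nat" and n :: nat
  assumes finite: "finite X"
    and lt_iff_key_less: "\<And>x y. x \<in> X \<Longrightarrow> y \<in> X \<Longrightarrow> k x \<noteq> k y \<Longrightarrow> lt x y \<longleftrightarrow> k x < k y"
    and key_less: "\<And>x. x \<in> X \<Longrightarrow> k x < 3 * n"
    and link_unique: "\<And>x y. x \<in> X \<Longrightarrow> y \<in> X \<Longrightarrow> k x = k y \<Longrightarrow> k x mod 3 = 1 \<Longrightarrow> x = y"
    and link_exists: "\<And>j. j < n \<Longrightarrow> \<exists>x \<in> X. k x = 3 * j + 1"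
    and block_reaches_link:
      "\<And>x y. x \<in> X \<Longrightarrow> y \<in> X \<Longrightarrow> k x + 1 = k y \<Longrightarrow> k y mod 3 = 1 \<Longrightarrow> R x y"
    and link_reaches_block:
      "\<And>x y. x \<in> X \<Longrightarrow> y \<in> X \<Longrightarrow> k x + 1 = k y \<Longrightarrow> k x mod 3 = 1 \<Longrightarrow> R x y"
    and reaches_link_only_from_block:
      "\<And>x y. x \<in> X \<Longrightarrow> y \<in> X \<Longrightarrow> R x y \<Longrightarrow> k y mod 3 = 1 \<Longrightarrow> k x mod 3 = 0"
    and link_reaches_only_block:
      "\<And>x y. x \<in> X \<Longrightarrow> y \<in> X \<Longrightarrow> R x y \<Longrightarrow> k x mod 3 = 1 \<Longrightarrow> k y mod 3 = 2"

lemma mod3_complement: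
  fixes a c m :: nat
  assumes "c + a = 3 * m + 2"
  shows "c mod 3 = 0 \<longleftrightarrow> a mod 3 = 2" "c mod 3 = 1 \<longleftrightarrow> a mod 3 = 1" "c mod 3 = 2 \<longleftrightarrow> a mod 3 = 0"
  using assms by presburger+

lemma reversed_key_arith:
  fixes a b n :: nat
  assumes "a < 3 * n" "b < 3 * n"
  shows "3 * n - 1 - a < 3 * n" "3 * n - 1 - a = 3 * n - 1 - b \<longleftrightarrow> a = b"
    "3 * n - 1 - a < 3 * n - 1 - b \<longleftrightarrow> b < a" "3 * n - 1 - a + 1 = 3 * n - 1 - b \<longleftrightarrow> b + 1 = a"
    "(3 * n - 1 - a) mod 3 = 0 \<longleftrightarrow> a mod 3 = 2" "(3 * n - 1 - a) mod 3 = 1 \<longleftrightarrow> a mod 3 = 1"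
    "(3 * n - 1 - a) mod 3 = 2 \<longleftrightarrow> a mod 3 = 0"
proof -
  show "3 * n - 1 - a < 3 * n" "3 * n - 1 - a = 3 * n - 1 - b \<longleftrightarrow> a = b"
    "3 * n - 1 - a < 3 * n - 1 - b \<longleftrightarrow> b < a" "3 * n - 1 - a + 1 = 3 * n - 1 - b \<longleftrightarrow> b + 1 = a"
    using assms by linarith+
  have "(3 * n - 1 - a) + a = 3 * (n - 1) + 2" using assms(1) by simp
  then show "(3 * n - 1 - a) mod 3 = 0 \<longleftrightarrow> a mod 3 = 2" "(3 * n - 1 - a) mod 3 = 1 \<longleftrightarrow> a mod 3 = 1"
    "(3 * n - 1 - a) mod 3 = 2 \<longleftrightarrow> a mod 3 = 0"
    by (fact mod3_complement)+
qed

lemma block_order_reverse: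
  assumes "block_order X lt R k n"
  shows "block_order X (\<lambda>x y. lt y x) (\<lambda>x y. R y x) (\<lambda>x. 3 * n - 1 - k x) n"
proof -
  interpret block_order X lt R k n by (fact assms)
  note rev = reversed_key_arith[OF key_less key_less]
  show ?thesis
  proof
    fix x y assume xy: "x \<in> X" "y \<in> X"
    note rev_xy = rev[OF xy] rev[OF xy(2,1)]
    show "3 * n - 1 - k x \<noteq> 3 * n - 1 - k y \<Longrightarrow> lt y x \<longleftrightarrow> 3 * n - 1 - k x < 3 * n - 1 - k y"
      using lt_iff_key_less[OF xy(2,1)] rev_xy by simp
    show "3 * n - 1 - k x = 3 * n - 1 - k y \<Longrightarrow> (3 * n - 1 - k x) mod 3 = 1 \<Longrightarrow> x = y"
      using link_unique[OF xy] rev_xy by simp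
    show "3 * n - 1 - k x + 1 = 3 * n - 1 - k y \<Longrightarrow> (3 * n - 1 - k y) mod 3 = 1 \<Longrightarrow> R y x"
      using link_reaches_block[OF xy(2,1)] rev_xy by simp
    show "3 * n - 1 - k x + 1 = 3 * n - 1 - k y \<Longrightarrow> (3 * n - 1 - k x) mod 3 = 1 \<Longrightarrow> R y x"
      using block_reaches_link[OF xy(2,1)] rev_xy by simp
    show "R y x \<Longrightarrow> (3 * n - 1 - k y) mod 3 = 1 \<Longrightarrow> (3 * n - 1 - k x) mod 3 = 0"
      using link_reaches_only_block[OF xy(2,1)] rev_xy by simp
    show "R y x \<Longrightarrow> (3 * n - 1 - k x) mod 3 = 1 \<Longrightarrow> (3 * n - 1 - k y) mod 3 = 2"
      using reaches_link_only_from_block[OF xy(2,1)] rev_xy by simp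
  next
    fix j assume "j < n"
    then obtain x where "x \<in> X" "k x = 3 * (n - 1 - j) + 1" using link_exists[of "n - 1 - j"] by auto
    moreover have "3 * n - 1 - (3 * (n - 1 - j) + 1) = 3 * j + 1" using \<open>j < n\<close> by simp
    ultimately show "\<exists>x \<in> X. 3 * n - 1 - k x = 3 * j + 1" by metis
  qed (use finite rev in auto)
qed


locale block_order_iso =
  A: block_order X lt R k n + B: block_order X' lt' R' k' n
  for X :: "'a set" and lt R k and X' :: "'b set" and lt' R' k' and n +
  fixes f :: "'a \<Rightarrow> 'b"
  assumes bij: "bij_betw f X X'"
    and lt_iff: "\<And>x y. x \<in> X \<Longrightarrow> y \<in> X \<Longrightarrow> lt' (f x) (f y) \<longleftrightarrow> lt x y"
    and R_iff: "\<And>x y. x \<in> X \<Longrightarrow> y \<in> X \<Longrightarrow> R' (f x) (f y) \<longleftrightarrow> R x y"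
    and lower_block_card: "\<And>j. card {x \<in> X. k x = 3 * j} = card {x \<in> X'. k' x = 3 * j}"
begin

lemma image_in: "x \<in> X \<Longrightarrow> f x \<in> X'"
  using bij by (meson bij_betwE)

lemma preimage: "x' \<in> X' \<Longrightarrow> \<exists>x \<in> X. x' = f x"
  using bij by (metis bij_betw_def imageE)

lemma key_le_if_image_key_less:
  assumes "x \<in> X" "y \<in> X" "k' (f y) < k' (f x)"
  shows "k y \<le> k x"
proof -
  have "lt' (f y) (f x)" using assms B.lt_iff_key_less image_in by fastforce
  then have "lt y x" using lt_iff assms by blast
  then show ?thesis using A.lt_iff_key_less assms by fastforce
qed

lemma inverse: "block_order_iso X' lt' R' k' X lt R k n (inv_into X f)"
proof -
  have inv: "x' \<in> X' \<Longrightarrow> inv_into X f x' \<in> X \<and> f (inv_into X f x') = x'" for x'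
    using bij by (meson bij_betw_inv_into bij_betwE bij_betw_inv_into_right)
  show ?thesis
    by unfold_locales (use bij_betw_inv_into[OF bij] lower_block_card inv lt_iff R_iff in metis)+
qed

text \<open>Suppose \<open>x\<close> is an element of least key whose key is raised by \<open>f\<close>. Then \<open>x\<close> lies
  neither in a lower block (too few elements remain for the image block), nor is it a link
  (links are unique), nor does it lie in an upper block (the image of the preceding link, which
  reaches only upper blocks, would leave no room for the following link).\<close>

context
  fixes x assumes x: "x \<in> X"
    and agree_below: "\<And>y. y \<in> X \<Longrightarrow> k y < k x \<Longrightarrow> k' (f y) = k y"
    and raised: "k x < k' (f x)"
begin

lemma raised_preimage_key:
  assumes "y \<in> X" "k' (f y) < k' (f x)" "k' (f y) \<noteq> k y"
  shows "k y = k x"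
  using key_le_if_image_key_less[OF x assms(1,2)] agree_below assms by fastforce

lemma raised_not_lower: "k x mod 3 \<noteq> 0"
proof
  assume "k x mod 3 = 0"
  then obtain j where j: "k x = 3 * j" by (metis mult_div_mod_eq add_0_right)
  let ?S = "{y \<in> X. k y = 3 * j}" and ?S' = "{y \<in> X'. k' y = 3 * j}"
  have "?S' \<subseteq> f ` (?S - {x})"
  proof
    fix y' assume "y' \<in> ?S'"
    then obtain y where y: "y \<in> X" "y' = f y" "k' (f y) = 3 * j" using preimage by blast
    then have "k y = k x" using raised_preimage_key[OF y(1)] j raised by (cases "k' (f y) = k y") auto
    moreover have "y \<noteq> x" using y j raised by auto
    ultimately have "y \<in> ?S - {x}" using y(1) j by simp
    then show "y' \<in> f ` (?S - {x})" using y(2) by blast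
  qed
  moreover have "finite (?S - {x})" using A.finite by simp
  ultimately have "card ?S' \<le> card (f ` (?S - {x}))" by (simp add: card_mono)
  also have "\<dots> \<le> card (?S - {x})" by (rule card_image_le) (use A.finite in simp)
  also have "\<dots> < card ?S" using A.finite x j by (intro psubset_card_mono) auto
  finally show False using lower_block_card by simp
qed

lemma raised_not_link: "k x mod 3 \<noteq> 1"
proof
  assume "k x mod 3 = 1"
  then obtain j where j: "k x = 3 * j + 1" by (metis mult_div_mod_eq add.commute)
  then have "j < n" using A.key_less[OF x] by simp
  then obtain y where y: "y \<in> X" "k' (f y) = 3 * j + 1" using B.link_exists preimage by metis
  then have "k y = k x" using raised_preimage_key j raised by (metis less_irrefl)
  then have "y = x" using A.link_unique[OF y(1) x] j by simp
  then show False using y j raised by simp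
qed

lemma raised_not_upper: "k x mod 3 \<noteq> 2"
proof
  assume "k x mod 3 = 2"
  then obtain j where j: "k x = 3 * j + 2" by (metis mult_div_mod_eq add.commute)
  have "j < n" using A.key_less[OF x] j by simp
  then obtain e where e: "e \<in> X" "k e = 3 * j + 1" using A.link_exists by blast
  have e_image: "k' (f e) = 3 * j + 1" using agree_below e j by simp
  have upper: "k' (f y) mod 3 = 2" if "y \<in> X" "k y = 3 * j + 2" for y
  proof -
    have "R' (f e) (f y)" using A.link_reaches_block e that R_iff by simp
    moreover have "k' (f e) mod 3 = 1" using e_image by simp
    ultimately show ?thesis using B.link_reaches_only_block image_in e(1) that(1) by blast
  qed
  have "k' (f x) mod 3 = 2" using upper x j by simp
  then have above: "3 * j + 5 \<le> k' (f x)" using raised j by presburger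
  then have "j + 1 < n" using B.key_less[OF image_in[OF x]] by simp
  then obtain w where w: "w \<in> X" "k' (f w) = 3 * (j + 1) + 1" using B.link_exists preimage by metis
  moreover have "k w \<le> k x" using key_le_if_image_key_less[OF x w(1)] w above by simp
  ultimately have "k w = k x" using raised_preimage_key[OF w(1)] above j by simp
  then have "k' (f w) mod 3 = 2" using upper w(1) j by simp
  then show False using w(2) by simp
qed

end

lemma key_not_raised:
  assumes "x \<in> X" "\<And>y. y \<in> X \<Longrightarrow> k y < k x \<Longrightarrow> k' (f y) = k y"
  shows "\<not> k x < k' (f x)"
  using raised_not_lower[OF assms] raised_not_link[OF assms] raised_not_upper[OF assms] by presburger

text \<open>At a counterexample minimising \<open>min (k x) (k' (f x))\<close>, the key is raised either by \<open>f\<close> or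
  by its inverse.\<close>

lemma key_preserved:
  assumes "x \<in> X"
  shows "k' (f x) = k x"
proof (rule ccontr)
  assume "k' (f x) \<noteq> k x"
  then obtain x where x: "x \<in> X" "k' (f x) \<noteq> k x"
    and least: "\<And>y. y \<in> X \<Longrightarrow> k' (f y) \<noteq> k y \<Longrightarrow> min (k x) (k' (f x)) \<le> min (k y) (k' (f y))"
    using ex_has_least_nat[of "\<lambda>x. x \<in> X \<and> k' (f x) \<noteq> k x" x "\<lambda>x. min (k x) (k' (f x))"] assms
    by blast
  show False
  proof (cases "k x < k' (f x)")
    case True
    then show False using key_not_raised[OF x(1)] least by fastforce
  next
    case False
    interpret inv: block_order_iso X' lt' R' k' X lt R k n "inv_into X f" by (rule inverse)
    have inv_f: "inv_into X f (f y) = y" if "y \<in> X" for y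
      using bij that by (meson bij_betw_inv_into_left)
    have "\<not> k' (f x) < k (inv_into X f (f x))"
    proof (rule inv.key_not_raised[OF image_in[OF x(1)]])
      fix y' assume y': "y' \<in> X'" "k' y' < k' (f x)"
      then obtain y where "y \<in> X" "y' = f y" using preimage by blast
      then show "k (inv_into X f y') = k' y'" using least y' False inv_f by fastforce
    qed
    then show False using False x inv_f by simp
  qed
qed

end


section \<open>The composite of two POP-graphs\<close>

lemma pop_comp_simps [simp]:
  "psrc (pop_comp G2 G1) = comp_src G1 G2" "ptgt (pop_comp G2 G1) = comp_tgt G1 G2"
  "pprec (pop_comp G2 G1) = comp_prec G1 G2"
  unfolding pop_comp_def by simp_all

lemma pop_comp_edge_iff [simp]:
  "Inl (Inl e) \<in> pedges (pop_comp G2 G1) \<longleftrightarrow> e \<in> pedges G1 \<and> e \<notin> outputs G1"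
  "Inl (Inr d) \<in> pedges (pop_comp G2 G1) \<longleftrightarrow> d \<in> pedges G2 \<and> d \<notin> inputs G2"
  "Inr (oe, i) \<in> pedges (pop_comp G2 G1) \<longleftrightarrow>
     oe \<in> outputs G1 \<and> i \<in> inputs G2 \<and> rank G1 (outputs G1) oe = rank G2 (inputs G2) i"
  unfolding pop_comp_def by auto

lemma pop_comp_edgeE:
  assumes "x \<in> pedges (pop_comp G2 G1)"
  obtains (first) e where "x = Inl (Inl e)" "e \<in> pedges G1" "e \<notin> outputs G1"
    | (second) d where "x = Inl (Inr d)" "d \<in> pedges G2" "d \<notin> inputs G2"
    | (link) oe i where "x = Inr (oe, i)" "oe \<in> outputs G1" "i \<in> inputs G2"
        "rank G1 (outputs G1) oe = rank G2 (inputs G2) i"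
  using assms unfolding pop_comp_def by auto

lemma comp_src_in_second_iff: "(\<exists>v. comp_src G1 G2 x = Inr v) \<longleftrightarrow> (\<exists>d. x = Inl (Inr d))"
  by (cases "(G1, G2, x)" rule: comp_src.cases) auto

lemma comp_tgt_in_first_iff: "(\<exists>v. comp_tgt G1 G2 x = Inl v) \<longleftrightarrow> (\<exists>e. x = Inl (Inl e))"
  by (cases "(G1, G2, x)" rule: comp_tgt.cases) auto

lemma mod_3_simps [simp]: "Suc (3 * m) mod 3 = 1" "Suc (Suc (3 * m)) mod 3 = 2"
  by presburger+

lemma comp_prec_iff_key_less:
  "comp_key G1 G2 x \<noteq> comp_key G1 G2 y \<Longrightarrow> comp_prec G1 G2 x y \<longleftrightarrow> comp_key G1 G2 x < comp_key G1 G2 y"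
  by (cases "(G1, G2, x, y)" rule: comp_prec.cases) auto

locale composite =
  fixes G1 :: "('v1, 'e1) pop" and G2 :: "('v2, 'e2) pop"
  assumes pop1: "pop_graph G1" and pop2: "pop_graph G2" and composable: "composable G1 G2"
begin

abbreviation "C \<equiv> pop_comp G2 G1"
abbreviation "key \<equiv> comp_key G1 G2"
abbreviation "n \<equiv> card (outputs G1)"
abbreviation "out_rank \<equiv> rank G1 (outputs G1)"
abbreviation "in_rank \<equiv> rank G2 (inputs G2)"

lemma progressive1: "progressive G1" and planar1: "planar_order G1"
  and progressive2: "progressive G2" and planar2: "planar_order G2"
  using pop1 pop2 unfolding pop_graph_def by auto

lemma outputs_subset: "outputs G1 \<subseteq> pedges G1" unfolding outputs_def by auto
lemma inputs_subset: "inputs G2 \<subseteq> pedges G2" unfolding inputs_def by auto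
lemma card_inputs: "card (inputs G2) = n" using composable unfolding composable_def by simp

sublocale out: planar_rank G1 "outputs G1"
  using planar1 progressive_finite_edges[OF progressive1] outputs_subset by unfold_locales

sublocale inp: planar_rank G2 "inputs G2"
  using planar2 progressive_finite_edges[OF progressive2] inputs_subset by unfold_locales

lemma out_rank_bij: "bij_betw out_rank (outputs G1) {..<n}"
  by (rule out.bij_betw_rank)

lemma in_rank_bij: "bij_betw in_rank (inputs G2) {..<n}"
  using inp.bij_betw_rank card_inputs by simp

lemma out_rank_eq_iff: "oe \<in> outputs G1 \<Longrightarrow> oe' \<in> outputs G1 \<Longrightarrow> out_rank oe = out_rank oe' \<longleftrightarrow> oe = oe'"
  using out_rank_bij by (metis bij_betw_def inj_on_eq_iff)

lemma in_rank_eq_iff: "i \<in> inputs G2 \<Longrightarrow> i' \<in> inputs G2 \<Longrightarrow> in_rank i = in_rank i' \<longleftrightarrow> i = i'"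
  using in_rank_bij by (metis bij_betw_def inj_on_eq_iff)

lemma out_rank_less: "oe \<in> outputs G1 \<Longrightarrow> out_rank oe < n"
  using out_rank_bij by (meson bij_betwE lessThan_iff)

lemma in_rank_less: "i \<in> inputs G2 \<Longrightarrow> in_rank i < n"
  using in_rank_bij by (meson bij_betwE lessThan_iff)

lemma output_of_rank: "j < n \<Longrightarrow> \<exists>oe \<in> outputs G1. out_rank oe = j"
  using out_rank_bij unfolding bij_betw_def by (metis imageE lessThan_iff)

lemma input_of_rank: "j < n \<Longrightarrow> \<exists>i \<in> inputs G2. in_rank i = j"
  using in_rank_bij unfolding bij_betw_def by (metis imageE lessThan_iff)

lemma out_rank_less_of_non_output:
  assumes "e \<in> pedges G1" "e \<notin> outputs G1"
  shows "out_rank e < n"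
proof -
  obtain oe where oe: "oe \<in> outputs G1" "reach G1 e oe" using reaches_some_output[OF progressive1 assms] by blast
  then have "pprec G1 e oe" using reach_imp_prec[OF planar1 assms(1)] outputs_subset by blast
  then have "out_rank e \<le> out_rank oe" using out.rank_mono assms(1) oe(1) outputs_subset by blast
  then show ?thesis using out_rank_less[OF oe(1)] by linarith
qed

lemma in_rank_pos_of_non_input:
  assumes "d \<in> pedges G2" "d \<notin> inputs G2"
  shows "1 \<le> in_rank d"
proof -
  obtain i where i: "i \<in> inputs G2" "reach G2 i d" using reached_from_some_input[OF progressive2 assms] by blast
  then have "pprec G2 i d" using reach_imp_prec[OF planar2 _ assms(1)] inputs_subset by blast
  then have "in_rank i < in_rank d" using inp.prec_iff_rank_less[OF i(1) assms(1)] by blast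
  then show ?thesis by linarith
qed

lemma in_rank_le: "in_rank d \<le> n"
proof -
  have "{z \<in> inputs G2. pprec G2 z d} \<subseteq> inputs G2" by blast
  moreover have "finite (inputs G2)"
    using progressive_finite_edges[OF progressive2] inputs_subset by (rule finite_subset[rotated])
  ultimately show ?thesis unfolding rank_def using card_inputs by (metis card_mono)
qed

lemma finite_edges: "finite (pedges C)"
proof -
  have "finite (outputs G1 \<times> inputs G2)"
    using progressive_finite_edges[OF progressive1] progressive_finite_edges[OF progressive2]
      outputs_subset inputs_subset by (meson finite_SigmaI finite_subset)
  then have "finite {(oe, i). oe \<in> outputs G1 \<and> i \<in> inputs G2 \<and> out_rank oe = in_rank i}"
    by (rule finite_subset[rotated]) auto
  then show ?thesis
    using progressive_finite_edges[OF progressive1] progressive_finite_edges[OF progressive2]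
    unfolding pop_comp_def by simp
qed

lemma edge_ends: "x \<in> pedges C \<Longrightarrow> psrc C x \<in> pverts C \<and> ptgt C x \<in> pverts C"
proof (induction rule: pop_comp_edgeE)
  case (first e)
  then show ?case unfolding pop_comp_def
    using progressive_edge_ends[OF progressive1] src_notin_sinks[OF progressive1]
      tgt_notin_sinks[OF progressive1] by auto
next
  case (second d)
  then show ?case unfolding pop_comp_def
    using progressive_edge_ends[OF progressive2] tgt_notin_sources[OF progressive2]
      src_notin_sources[OF progressive2] by auto
next
  case (link oe i)
  then have "oe \<in> pedges G1" "i \<in> pedges G2" using outputs_subset inputs_subset by auto
  with link show ?case unfolding pop_comp_def
    using progressive_edge_ends[OF progressive1] progressive_edge_ends[OF progressive2]
      src_notin_sinks[OF progressive1] tgt_notin_sources[OF progressive2] by auto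
qed

lemma key_less: "x \<in> pedges C \<Longrightarrow> key x < 3 * n"
proof (induction rule: pop_comp_edgeE)
  case (first e)
  then show ?case using out_rank_less_of_non_output by simp
next
  case (second d)
  then show ?case using in_rank_pos_of_non_input[of d] in_rank_le[of d] by simp
next
  case (link oe i)
  then show ?case using out_rank_less[OF link(2)] by simp
qed

lemma key_mod_3_eq_0_iff: "x \<in> pedges C \<Longrightarrow> key x mod 3 = 0 \<longleftrightarrow> (\<exists>e. x = Inl (Inl e))"
  by (erule pop_comp_edgeE) auto

lemma key_mod_3_eq_1_iff: "x \<in> pedges C \<Longrightarrow> key x mod 3 = 1 \<longleftrightarrow> (\<exists>oe i. x = Inr (oe, i))"
  by (erule pop_comp_edgeE) auto

lemma key_mod_3_eq_2_iff: "x \<in> pedges C \<Longrightarrow> key x mod 3 = 2 \<longleftrightarrow> (\<exists>d. x = Inl (Inr d))"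
  by (erule pop_comp_edgeE) auto

lemma link_unique:
  assumes x: "x \<in> pedges C" and y: "y \<in> pedges C" and eq: "key x = key y" and link: "key x mod 3 = 1"
  shows "x = y"
proof -
  obtain oe i oe' i' where xy: "x = Inr (oe, i)" "y = Inr (oe', i')"
    using key_mod_3_eq_1_iff[OF x] key_mod_3_eq_1_iff[OF y] eq link by metis
  moreover have "oe \<in> outputs G1" "oe' \<in> outputs G1" "i \<in> inputs G2" "i' \<in> inputs G2"
    "out_rank oe = in_rank i" "out_rank oe' = in_rank i'"
    using x y xy by auto
  moreover have "out_rank oe = out_rank oe'" using eq xy by simp
  ultimately have "oe = oe'" "i = i'" using out_rank_eq_iff in_rank_eq_iff by metis+
  then show ?thesis using xy by simp
qed

lemma link_exists:
  assumes "j < n"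
  shows "\<exists>x \<in> pedges C. key x = 3 * j + 1"
proof -
  obtain oe i where "oe \<in> outputs G1" "out_rank oe = j" "i \<in> inputs G2" "in_rank i = j"
    using output_of_rank[OF assms] input_of_rank[OF assms] by blast
  then show ?thesis by (intro bexI[of _ "Inr (oe, i)"]) auto
qed


text \<open>Planarity (P2) enters here: an edge of \<open>Q\<^sub>k\<close> reaches the output \<open>o\<^sub>k\<close>, and the
  input \<open>i\<^sub>k\<close> reaches every edge of \<open>P\<^sub>k\<close>.\<close>

lemma reaches_output_of_same_rank:
  assumes e: "e \<in> pedges G1" "e \<notin> outputs G1" and oe: "oe \<in> outputs G1"
    and rank: "out_rank oe = out_rank e"
  shows "reach G1 e oe"
proof -
  obtain o' where o': "o' \<in> outputs G1" "reach G1 e o'"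
    using reaches_some_output[OF progressive1 e] by blast
  have o'E: "o' \<in> pedges G1" and oeE: "oe \<in> pedges G1" using o' oe outputs_subset by auto
  have e_o': "pprec G1 e o'" using reach_imp_prec[OF planar1 e(1) o'E o'(2)] .
  have "\<not> pprec G1 oe e" using out.prec_iff_rank_less[OF oe e(1)] rank by simp
  then have e_oe: "pprec G1 e oe" using planar_order_not_prec_iff[OF planar1 oeE e(1)] e oe by auto
  show ?thesis
  proof (cases "o' = oe")
    case True
    then show ?thesis using o' by simp
  next
    case False
    then have "out_rank o' \<noteq> out_rank oe" using out_rank_eq_iff o' oe by blast
    moreover have "out_rank e \<le> out_rank o'" using out.rank_mono[OF e(1) o'E e_o'] .
    ultimately have "pprec G1 oe o'" using out.prec_iff_rank_less[OF oe o'E] rank by linarith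
    then have "reach G1 e oe \<or> reach G1 oe o'"
      using planar_order_reach_between[OF planar1 e(1) oeE o'E e_oe _ o'(2)] by blast
    moreover have "\<not> reach G1 oe o'"
      using trancl_edge_step_source_not_output[OF progressive1] oe unfolding reach_def by blast
    ultimately show ?thesis by blast
  qed
qed

lemma reached_from_input_of_preceding_rank:
  assumes d: "d \<in> pedges G2" "d \<notin> inputs G2" and i: "i \<in> inputs G2"
    and rank: "in_rank i + 1 = in_rank d"
  shows "reach G2 i d"
proof -
  obtain i' where i': "i' \<in> inputs G2" "reach G2 i' d"
    using reached_from_some_input[OF progressive2 d] by blast
  have i'E: "i' \<in> pedges G2" and iE: "i \<in> pedges G2" using i' i inputs_subset by auto
  have "pprec G2 i' d" using reach_imp_prec[OF planar2 i'E d(1) i'(2)] .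
  then have i'_d: "in_rank i' < in_rank d" using inp.prec_iff_rank_less[OF i'(1) d(1)] by blast
  have i_d: "pprec G2 i d" using inp.prec_iff_rank_less[OF i d(1)] rank by simp
  show ?thesis
  proof (cases "i' = i")
    case True
    then show ?thesis using i' by simp
  next
    case False
    then have "in_rank i' \<noteq> in_rank i" using in_rank_eq_iff i' i by blast
    then have "pprec G2 i' i" using inp.prec_iff_rank_less[OF i'(1) iE] i'_d rank by linarith
    then have "reach G2 i' i \<or> reach G2 i d"
      using planar_order_reach_between[OF planar2 i'E iE d(1) _ i_d i'(2)] by blast
    moreover have "\<not> reach G2 i' i"
      using trancl_edge_step_target_not_input[OF progressive2] i unfolding reach_def by blast
    ultimately show ?thesis by blast
  qed
qed

lemma first_trancl_lift:
  assumes "(a, b) \<in> (edge_step G1)\<^sup>+" "b \<notin> outputs G1"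
  shows "(Inl (Inl a), Inl (Inl b)) \<in> (edge_step C)\<^sup>+"
  using assms
proof (induction rule: trancl_induct)
  case (base b)
  then have "a \<notin> outputs G1"
    using output_tgt_no_out_edge[OF progressive1, of a b] by (auto simp: edge_step_def)
  then show ?case using base by (intro r_into_trancl) (auto simp: edge_step_def)
next
  case (step b c)
  then have "b \<notin> outputs G1"
    using output_tgt_no_out_edge[OF progressive1, of b c] by (auto simp: edge_step_def)
  then have "(Inl (Inl b), Inl (Inl c)) \<in> edge_step C" using step by (auto simp: edge_step_def)
  then show ?case using step \<open>b \<notin> outputs G1\<close> by (meson trancl_into_trancl)
qed

lemma second_trancl_lift:
  assumes "(a, b) \<in> (edge_step G2)\<^sup>+" "a \<notin> inputs G2"
  shows "(Inl (Inr a), Inl (Inr b)) \<in> (edge_step C)\<^sup>+"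
  using assms
proof (induction rule: trancl_induct)
  case (base b)
  then have "b \<notin> inputs G2"
    using input_src_no_in_edge[OF progressive2, of b a] by (auto simp: edge_step_def)
  then show ?case using base by (intro r_into_trancl) (auto simp: edge_step_def)
next
  case (step b c)
  then have "b \<notin> inputs G2" using trancl_edge_step_target_not_input[OF progressive2] by blast
  moreover have "c \<notin> inputs G2"
    using step input_src_no_in_edge[OF progressive2, of c b] by (auto simp: edge_step_def)
  ultimately have "(Inl (Inr b), Inl (Inr c)) \<in> edge_step C"
    using step by (auto simp: edge_step_def)
  then show ?case using step by (meson trancl_into_trancl)
qed

lemma block_reaches_link:
  assumes x: "x \<in> pedges C" and y: "y \<in> pedges C" and "key x + 1 = key y" "key y mod 3 = 1"
  shows "reach C x y"
proof -
  have "key x mod 3 = 0" using assms(3,4) by presburger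
  then obtain e where xe: "x = Inl (Inl e)" using key_mod_3_eq_0_iff[OF x] by metis
  obtain oe i where yo: "y = Inr (oe, i)" using key_mod_3_eq_1_iff[OF y] assms(4) by metis
  have e: "e \<in> pedges G1" "e \<notin> outputs G1" and oe: "oe \<in> outputs G1" using x y xe yo by auto
  have oE: "oe \<in> pedges G1" using oe outputs_subset by blast
  have "out_rank oe = out_rank e" using assms(3) xe yo by simp
  then have "(e, oe) \<in> (edge_step G1)\<^sup>+"
    using reaches_output_of_same_rank[OF e oe] unfolding reach_def by blast
  then obtain c where c: "(e, c) \<in> (edge_step G1)\<^sup>*" "(c, oe) \<in> edge_step G1" by (meson tranclD2)
  then have cE: "c \<in> pedges G1" "ptgt G1 c = psrc G1 oe" by (auto simp: edge_step_def)
  have c_out: "c \<notin> outputs G1" using output_tgt_no_out_edge[OF progressive1 _ oE] cE by metis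
  have "Inl (Inl c) \<in> pedges C" using cE c_out by simp
  then have last: "(Inl (Inl c), y) \<in> edge_step C" using cE y yo by (simp add: edge_step_def)
  have "(x, y) \<in> (edge_step C)\<^sup>+"
  proof (cases "e = c")
    case True
    then show ?thesis using last xe by auto
  next
    case False
    then have "(e, c) \<in> (edge_step G1)\<^sup>+" using c(1) by (meson rtranclD)
    then show ?thesis using first_trancl_lift c_out last xe by (meson trancl_into_trancl)
  qed
  then show ?thesis unfolding reach_def using xe yo by simp
qed

lemma link_reaches_block:
  assumes x: "x \<in> pedges C" and y: "y \<in> pedges C" and "key x + 1 = key y" "key x mod 3 = 1"
  shows "reach C x y"
proof -
  obtain oe i where xo: "x = Inr (oe, i)" using key_mod_3_eq_1_iff[OF x] assms(4) by metis
  have "key y mod 3 = 2" using assms(3,4) by presburger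
  then obtain d where yd: "y = Inl (Inr d)" using key_mod_3_eq_2_iff[OF y] by metis
  have i: "i \<in> inputs G2" "out_rank oe = in_rank i" and d: "d \<in> pedges G2" "d \<notin> inputs G2"
    using x y xo yd by auto
  have "in_rank i + 1 = in_rank d"
    using assms(3) xo yd i(2) in_rank_pos_of_non_input[OF d] by simp
  then have "(i, d) \<in> (edge_step G2)\<^sup>+"
    using reached_from_input_of_preceding_rank[OF d i(1)] unfolding reach_def by blast
  then obtain c where c: "(i, c) \<in> edge_step G2" "(c, d) \<in> (edge_step G2)\<^sup>*" by (meson tranclD)
  then have cE: "c \<in> pedges G2" "ptgt G2 i = psrc G2 c" by (auto simp: edge_step_def)
  have iE: "i \<in> pedges G2" using i inputs_subset by blast
  have c_in: "c \<notin> inputs G2" using input_src_no_in_edge[OF progressive2 _ iE] cE by metis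
  have "Inl (Inr c) \<in> pedges C" using cE c_in by simp
  then have first: "(x, Inl (Inr c)) \<in> edge_step C" using cE x xo by (simp add: edge_step_def)
  have "(x, y) \<in> (edge_step C)\<^sup>+"
  proof (cases "c = d")
    case True
    then show ?thesis using first yd by auto
  next
    case False
    then have "(c, d) \<in> (edge_step G2)\<^sup>+" using c(2) by (meson rtranclD)
    then show ?thesis using second_trancl_lift c_in first yd by (meson trancl_into_trancl2)
  qed
  then show ?thesis unfolding reach_def using xo yd by simp
qed

lemma link_reaches_only_block:
  assumes "reach C x y" "key x mod 3 = 1"
  shows "key y mod 3 = 2"
proof -
  have xy: "(x, y) \<in> (edge_step C)\<^sup>+" using assms(1) unfolding reach_def by blast
  obtain oe i where xo: "x = Inr (oe, i)"
    using key_mod_3_eq_1_iff assms(2) trancl_edge_step_edges[OF xy] by metis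
  from xy have "\<exists>v. psrc C y = Inr v"
  proof (induction rule: trancl_induct)
    case (base y)
    then show ?case using xo by (auto simp: edge_step_def dest: sym)
  next
    case (step y z)
    then show ?case using comp_src_in_second_iff[of G1 G2 y] by (auto simp: edge_step_def dest: sym)
  qed
  then show ?thesis using comp_src_in_second_iff key_mod_3_eq_2_iff trancl_edge_step_edges[OF xy]
    by (metis pop_comp_simps(1))
qed

lemma reaches_link_only_from_block:
  assumes "reach C x y" "key y mod 3 = 1"
  shows "key x mod 3 = 0"
proof -
  have xy: "(x, y) \<in> (edge_step C)\<^sup>+" using assms(1) unfolding reach_def by blast
  obtain oe i where yo: "y = Inr (oe, i)"
    using key_mod_3_eq_1_iff assms(2) trancl_edge_step_edges[OF xy] by metis
  from xy have "\<exists>v. ptgt C x = Inl v"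
  proof (induction rule: converse_trancl_induct)
    case (base x)
    then show ?case using yo by (auto simp: edge_step_def dest: sym)
  next
    case (step x z)
    then show ?case using comp_tgt_in_first_iff[of G1 G2 z] by (auto simp: edge_step_def dest: sym)
  qed
  then show ?thesis using comp_tgt_in_first_iff key_mod_3_eq_0_iff trancl_edge_step_edges[OF xy]
    by (metis pop_comp_simps(2))
qed

end


lemma reversed_key_lower_iff:
  fixes a j n :: nat
  assumes "a < 3 * n"
  shows "3 * n - 1 - a = 3 * j \<longleftrightarrow> j < n \<and> a = 3 * (n - 1 - j) + 2"
  using assms by (cases n) auto

fun first_factor_edge :: "('e1, 'e2) cedge \<Rightarrow> 'e1" where
  "first_factor_edge (Inl (Inl e)) = e"
| "first_factor_edge (Inr (oe, i)) = oe"
| "first_factor_edge (Inl (Inr d)) = undefined"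

fun second_factor_edge :: "('e1, 'e2) cedge \<Rightarrow> 'e2" where
  "second_factor_edge (Inl (Inr d)) = d"
| "second_factor_edge (Inr (oe, i)) = i"
| "second_factor_edge (Inl (Inl e)) = undefined"

context composite
begin

sublocale blocks: block_order "pedges C" "pprec C" "reach C" key n
proof
  fix x y assume x: "x \<in> pedges C" and y: "y \<in> pedges C"
  show "key x \<noteq> key y \<Longrightarrow> pprec C x y \<longleftrightarrow> key x < key y"
    using comp_prec_iff_key_less by simp
  show "key x = key y \<Longrightarrow> key x mod 3 = 1 \<Longrightarrow> x = y" using link_unique[OF x y] .
  show "key x + 1 = key y \<Longrightarrow> key y mod 3 = 1 \<Longrightarrow> reach C x y" using block_reaches_link[OF x y] .
  show "key x + 1 = key y \<Longrightarrow> key x mod 3 = 1 \<Longrightarrow> reach C x y" using link_reaches_block[OF x y] .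
  show "reach C x y \<Longrightarrow> key y mod 3 = 1 \<Longrightarrow> key x mod 3 = 0" using reaches_link_only_from_block .
  show "reach C x y \<Longrightarrow> key x mod 3 = 1 \<Longrightarrow> key y mod 3 = 2" using link_reaches_only_block .
qed (use finite_edges key_less link_exists in auto)

sublocale reversed_blocks:
  block_order "pedges C" "\<lambda>x y. pprec C y x" "\<lambda>x y. reach C y x" "\<lambda>x. 3 * n - 1 - key x" n
  by (rule block_order_reverse[OF blocks.block_order_axioms])

lemma lower_block_card:
  "card {x \<in> pedges C. key x = 3 * j} = card {e \<in> pedges G1. e \<notin> outputs G1 \<and> out_rank e = j}"
proof -
  have "{x \<in> pedges C. key x = 3 * j} = (Inl \<circ> Inl) ` {e \<in> pedges G1. e \<notin> outputs G1 \<and> out_rank e = j}"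
  proof (intro equalityI subsetI)
    fix x assume x: "x \<in> {x \<in> pedges C. key x = 3 * j}"
    then obtain e where "x = Inl (Inl e)" using key_mod_3_eq_0_iff by fastforce
    then show "x \<in> (Inl \<circ> Inl) ` {e \<in> pedges G1. e \<notin> outputs G1 \<and> out_rank e = j}" using x by auto
  qed auto
  then show ?thesis by (simp add: card_image inj_on_def)
qed

lemma upper_block_card:
  "card {x \<in> pedges C. key x = 3 * j + 2} = card {d \<in> pedges G2. d \<notin> inputs G2 \<and> in_rank d - 1 = j}"
proof -
  have "{x \<in> pedges C. key x = 3 * j + 2} = (Inl \<circ> Inr) ` {d \<in> pedges G2. d \<notin> inputs G2 \<and> in_rank d - 1 = j}"
  proof (intro equalityI subsetI)
    fix x assume x: "x \<in> {x \<in> pedges C. key x = 3 * j + 2}"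
    then obtain d where "x = Inl (Inr d)" using key_mod_3_eq_2_iff by fastforce
    then show "x \<in> (Inl \<circ> Inr) ` {d \<in> pedges G2. d \<notin> inputs G2 \<and> in_rank d - 1 = j}" using x by auto
  qed auto
  then show ?thesis by (simp add: card_image inj_on_def)
qed

lemma reversed_lower_block:
  "{x \<in> pedges C. 3 * n - 1 - key x = 3 * j} = {x \<in> pedges C. j < n \<and> key x = 3 * (n - 1 - j) + 2}"
  using reversed_key_lower_iff[OF key_less] by blast

definition first_factor_edges where "first_factor_edges = {x \<in> pedges C. key x mod 3 \<noteq> 2}"
definition second_factor_edges where "second_factor_edges = {x \<in> pedges C. key x mod 3 \<noteq> 0}"

lemma first_factor_edgesE:
  assumes "x \<in> first_factor_edges"
  obtains (block) e where "x = Inl (Inl e)" "e \<in> pedges G1" "e \<notin> outputs G1"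
    | (link) oe i where "x = Inr (oe, i)" "oe \<in> outputs G1" "i \<in> inputs G2" "out_rank oe = in_rank i"
  using assms unfolding first_factor_edges_def by (auto elim: pop_comp_edgeE)

lemma second_factor_edgesE:
  assumes "x \<in> second_factor_edges"
  obtains (block) d where "x = Inl (Inr d)" "d \<in> pedges G2" "d \<notin> inputs G2"
    | (link) oe i where "x = Inr (oe, i)" "oe \<in> outputs G1" "i \<in> inputs G2" "out_rank oe = in_rank i"
  using assms unfolding second_factor_edges_def by (auto elim: pop_comp_edgeE)

lemma bij_betw_first_factor_edge: "bij_betw first_factor_edge first_factor_edges (pedges G1)"
proof (rule bij_betw_imageI)
  show "inj_on first_factor_edge first_factor_edges"
  proof (rule inj_onI)
    fix x y assume "x \<in> first_factor_edges" "y \<in> first_factor_edges"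
      and "first_factor_edge x = first_factor_edge y"
    then show "x = y"
      by (elim first_factor_edgesE) (auto simp: out_rank_eq_iff in_rank_eq_iff dest: in_rank_eq_iff[THEN iffD1])
  qed
  show "first_factor_edge ` first_factor_edges = pedges G1"
  proof (intro equalityI subsetI)
    fix e assume "e \<in> first_factor_edge ` first_factor_edges"
    then obtain x where x: "x \<in> first_factor_edges" "e = first_factor_edge x" by blast
    from x(1) show "e \<in> pedges G1" using x(2) outputs_subset by (cases rule: first_factor_edgesE) auto
  next
    fix e assume e: "e \<in> pedges G1"
    show "e \<in> first_factor_edge ` first_factor_edges"
    proof (cases "e \<in> outputs G1")
      case True
      then obtain i where "i \<in> inputs G2" "in_rank i = out_rank e"
        using input_of_rank out_rank_less by blast
      then have "Inr (e, i) \<in> first_factor_edges" using True unfolding first_factor_edges_def by simp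
      then show ?thesis by (metis first_factor_edge.simps(2) image_eqI)
    next
      case False
      then have "Inl (Inl e) \<in> first_factor_edges" using e unfolding first_factor_edges_def by simp
      then show ?thesis by (metis first_factor_edge.simps(1) image_eqI)
    qed
  qed
qed

lemma bij_betw_second_factor_edge: "bij_betw second_factor_edge second_factor_edges (pedges G2)"
proof (rule bij_betw_imageI)
  show "inj_on second_factor_edge second_factor_edges"
  proof (rule inj_onI)
    fix x y assume "x \<in> second_factor_edges" "y \<in> second_factor_edges"
      and "second_factor_edge x = second_factor_edge y"
    then show "x = y"
      by (elim second_factor_edgesE) (auto simp: out_rank_eq_iff in_rank_eq_iff dest: out_rank_eq_iff[THEN iffD1])
  qed
  show "second_factor_edge ` second_factor_edges = pedges G2"
  proof (intro equalityI subsetI)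
    fix d assume "d \<in> second_factor_edge ` second_factor_edges"
    then obtain x where x: "x \<in> second_factor_edges" "d = second_factor_edge x" by blast
    from x(1) show "d \<in> pedges G2" using x(2) inputs_subset by (cases rule: second_factor_edgesE) auto
  next
    fix d assume d: "d \<in> pedges G2"
    show "d \<in> second_factor_edge ` second_factor_edges"
    proof (cases "d \<in> inputs G2")
      case True
      then obtain oe where "oe \<in> outputs G1" "out_rank oe = in_rank d"
        using output_of_rank in_rank_less by blast
      then have "Inr (oe, d) \<in> second_factor_edges" using True unfolding second_factor_edges_def by simp
      then show ?thesis by (metis second_factor_edge.simps(2) image_eqI)
    next
      case False
      then have "Inl (Inr d) \<in> second_factor_edges" using d unfolding second_factor_edges_def by simp
      then show ?thesis by (metis second_factor_edge.simps(1) image_eqI)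
    qed
  qed
qed

end


context composite
begin

lemma first_factor_edge_in: "x \<in> first_factor_edges \<Longrightarrow> first_factor_edge x \<in> pedges G1"
  using bij_betw_first_factor_edge by (meson bij_betwE)

lemma second_factor_edge_in: "x \<in> second_factor_edges \<Longrightarrow> second_factor_edge x \<in> pedges G2"
  using bij_betw_second_factor_edge by (meson bij_betwE)

lemma first_factor_edge_eq_iff:
  "x \<in> first_factor_edges \<Longrightarrow> y \<in> first_factor_edges \<Longrightarrow> first_factor_edge x = first_factor_edge y \<longleftrightarrow> x = y"
  using bij_betw_first_factor_edge by (metis bij_betw_def inj_on_eq_iff)

lemma second_factor_edge_eq_iff:
  "x \<in> second_factor_edges \<Longrightarrow> y \<in> second_factor_edges \<Longrightarrow> second_factor_edge x = second_factor_edge y \<longleftrightarrow> x = y"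
  using bij_betw_second_factor_edge by (metis bij_betw_def inj_on_eq_iff)

lemma first_factor_output_iff:
  "x \<in> first_factor_edges \<Longrightarrow> first_factor_edge x \<in> outputs G1 \<longleftrightarrow> key x mod 3 = 1"
  by (erule first_factor_edgesE) auto

lemma second_factor_input_iff:
  "x \<in> second_factor_edges \<Longrightarrow> second_factor_edge x \<in> inputs G2 \<longleftrightarrow> key x mod 3 = 1"
  by (erule second_factor_edgesE) auto

lemma first_factor_src: "x \<in> first_factor_edges \<Longrightarrow> psrc C x = Inl (psrc G1 (first_factor_edge x))"
  by (erule first_factor_edgesE) auto

lemma first_factor_tgt:
  "x \<in> first_factor_edges \<Longrightarrow> key x mod 3 \<noteq> 1 \<Longrightarrow> ptgt C x = Inl (ptgt G1 (first_factor_edge x))"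
  by (erule first_factor_edgesE) auto

lemma second_factor_tgt: "x \<in> second_factor_edges \<Longrightarrow> ptgt C x = Inr (ptgt G2 (second_factor_edge x))"
  by (erule second_factor_edgesE) auto

lemma second_factor_src:
  "x \<in> second_factor_edges \<Longrightarrow> key x mod 3 \<noteq> 1 \<Longrightarrow> psrc C x = Inr (psrc G2 (second_factor_edge x))"
  by (erule second_factor_edgesE) auto

text \<open>How the incidences and the order of \<open>G\<^sub>1\<close> and \<open>G\<^sub>2\<close> are read off the composite: only
  at the new edges, whose outer ends were deleted, does one need the key.\<close>

lemma first_factor_src_eq_iff:
  assumes "x \<in> first_factor_edges" "y \<in> first_factor_edges"
  shows "psrc G1 (first_factor_edge x) = psrc G1 (first_factor_edge y) \<longleftrightarrow> psrc C x = psrc C y"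
  using first_factor_src[OF assms(1)] first_factor_src[OF assms(2)] by simp

lemma first_factor_tgt_eq_iff:
  assumes x: "x \<in> first_factor_edges" and y: "y \<in> first_factor_edges"
  shows "ptgt G1 (first_factor_edge x) = ptgt G1 (first_factor_edge y) \<longleftrightarrow>
    (if key x mod 3 = 1 \<or> key y mod 3 = 1 then x = y else ptgt C x = ptgt C y)"
proof -
  have output_case: "ptgt G1 (first_factor_edge u) = ptgt G1 (first_factor_edge v) \<longleftrightarrow> u = v"
    if u: "u \<in> first_factor_edges" and v: "v \<in> first_factor_edges" and "key u mod 3 = 1" for u v
  proof
    assume "ptgt G1 (first_factor_edge u) = ptgt G1 (first_factor_edge v)"
    moreover have "first_factor_edge u \<in> outputs G1" using first_factor_output_iff[OF u] that(3) by simp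
    ultimately have "first_factor_edge v = first_factor_edge u"
      using output_unique_at_tgt[OF progressive1 _ first_factor_edge_in[OF v]] by simp
    then show "u = v" using first_factor_edge_eq_iff[OF v u] by simp
  qed simp
  show ?thesis
  proof (cases "key x mod 3 = 1 \<or> key y mod 3 = 1")
    case True
    then show ?thesis using output_case[OF x y] output_case[OF y x] by auto
  next
    case False
    then show ?thesis using first_factor_tgt[OF x] first_factor_tgt[OF y] by simp
  qed
qed

lemma first_factor_tgt_src_iff:
  assumes x: "x \<in> first_factor_edges" and y: "y \<in> first_factor_edges"
  shows "ptgt G1 (first_factor_edge x) = psrc G1 (first_factor_edge y) \<longleftrightarrow>
    key x mod 3 \<noteq> 1 \<and> ptgt C x = psrc C y"
proof (cases "key x mod 3 = 1")
  case True
  then have "first_factor_edge x \<in> outputs G1" using first_factor_output_iff[OF x] by simp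
  then show ?thesis
    using True output_tgt_no_out_edge[OF progressive1 _ first_factor_edge_in[OF y]] by metis
next
  case False
  then show ?thesis using first_factor_tgt[OF x] first_factor_src[OF y] by simp
qed

lemma first_factor_prec_iff:
  assumes x: "x \<in> first_factor_edges" and y: "y \<in> first_factor_edges"
  shows "pprec G1 (first_factor_edge x) (first_factor_edge y) \<longleftrightarrow> pprec C x y"
  using x
proof (cases rule: first_factor_edgesE)
  case (block e)
  from y show ?thesis
  proof (cases rule: first_factor_edgesE)
    case (block e')
    then show ?thesis using \<open>x = Inl (Inl e)\<close> \<open>e \<in> pedges G1\<close> out.prec_iff_rank_lex by auto
  next
    case (link oe i)
    moreover have "e \<noteq> oe" using block link by auto
    ultimately show ?thesis using block out.prec_iff_rank_le[of oe e] by auto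
  qed
next
  case (link oe i)
  from y show ?thesis
  proof (cases rule: first_factor_edgesE)
    case (block e')
    then show ?thesis using link out.prec_iff_rank_less by auto
  next
    case (link oe' i')
    then show ?thesis using \<open>x = Inr (oe, i)\<close> \<open>oe \<in> outputs G1\<close> out.prec_iff_rank_less outputs_subset by auto
  qed
qed

lemma second_factor_tgt_eq_iff:
  assumes "x \<in> second_factor_edges" "y \<in> second_factor_edges"
  shows "ptgt G2 (second_factor_edge x) = ptgt G2 (second_factor_edge y) \<longleftrightarrow> ptgt C x = ptgt C y"
  using second_factor_tgt[OF assms(1)] second_factor_tgt[OF assms(2)] by simp

lemma second_factor_src_eq_iff:
  assumes x: "x \<in> second_factor_edges" and y: "y \<in> second_factor_edges"
  shows "psrc G2 (second_factor_edge x) = psrc G2 (second_factor_edge y) \<longleftrightarrow>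
    (if key x mod 3 = 1 \<or> key y mod 3 = 1 then x = y else psrc C x = psrc C y)"
proof -
  have input_case: "psrc G2 (second_factor_edge u) = psrc G2 (second_factor_edge v) \<longleftrightarrow> u = v"
    if u: "u \<in> second_factor_edges" and v: "v \<in> second_factor_edges" and "key u mod 3 = 1" for u v
  proof
    assume "psrc G2 (second_factor_edge u) = psrc G2 (second_factor_edge v)"
    moreover have "second_factor_edge u \<in> inputs G2" using second_factor_input_iff[OF u] that(3) by simp
    ultimately have "second_factor_edge v = second_factor_edge u"
      using input_unique_at_src[OF progressive2 _ second_factor_edge_in[OF v]] by simp
    then show "u = v" using second_factor_edge_eq_iff[OF v u] by simp
  qed simp
  show ?thesis
  proof (cases "key x mod 3 = 1 \<or> key y mod 3 = 1")
    case True
    then show ?thesis using input_case[OF x y] input_case[OF y x] by auto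
  next
    case False
    then show ?thesis using second_factor_src[OF x] second_factor_src[OF y] by simp
  qed
qed

lemma second_factor_tgt_src_iff:
  assumes x: "x \<in> second_factor_edges" and y: "y \<in> second_factor_edges"
  shows "ptgt G2 (second_factor_edge x) = psrc G2 (second_factor_edge y) \<longleftrightarrow>
    key y mod 3 \<noteq> 1 \<and> ptgt C x = psrc C y"
proof (cases "key y mod 3 = 1")
  case True
  then have "second_factor_edge y \<in> inputs G2" using second_factor_input_iff[OF y] by simp
  then show ?thesis
    using True input_src_no_in_edge[OF progressive2 _ second_factor_edge_in[OF x]] by metis
next
  case False
  then show ?thesis using second_factor_tgt[OF x] second_factor_src[OF y] by simp
qed

lemma second_factor_prec_iff:
  assumes x: "x \<in> second_factor_edges" and y: "y \<in> second_factor_edges"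
  shows "pprec G2 (second_factor_edge x) (second_factor_edge y) \<longleftrightarrow> pprec C x y"
  using x
proof (cases rule: second_factor_edgesE)
  case (block d)
  have d: "1 \<le> in_rank d" using in_rank_pos_of_non_input block(2,3) .
  from y show ?thesis
  proof (cases rule: second_factor_edgesE)
    case (block d')
    then show ?thesis using \<open>x = Inl (Inr d)\<close> \<open>d \<in> pedges G2\<close> d in_rank_pos_of_non_input[of d']
        inp.prec_iff_rank_lex[of d d'] by auto
  next
    case (link oe i)
    moreover have "d \<noteq> i" using block link by auto
    ultimately show ?thesis using block d inp.prec_iff_rank_le[of i d] by auto
  qed
next
  case (link oe i)
  from y show ?thesis
  proof (cases rule: second_factor_edgesE)
    case (block d')
    then show ?thesis using link in_rank_pos_of_non_input[of d'] inp.prec_iff_rank_less[of i d'] by auto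
  next
    case (link oe' i')
    then show ?thesis
      using \<open>x = Inr (oe, i)\<close> \<open>i \<in> inputs G2\<close> \<open>out_rank oe = in_rank i\<close> inp.prec_iff_rank_less inputs_subset
      by auto
  qed
qed

end


section \<open>Cancellation\<close>

locale composite_iso =
  A: composite G1 G2 + B: composite G1' G2' +
  I: pop_isomorphism "pop_comp G2 G1" "pop_comp G2' G1'" fv fe
  for G1 :: "('v1, 'e1) pop" and G2 :: "('v2, 'e2) pop"
    and G1' :: "('v3, 'e3) pop" and G2' :: "('v4, 'e4) pop" and fv fe
begin

lemma bij_betw_key_class:
  assumes keys: "\<And>x. x \<in> pedges A.C \<Longrightarrow> B.key (fe x) = A.key x"
  shows "bij_betw fe {x \<in> pedges A.C. P (A.key x)} {x \<in> pedges B.C. P (B.key x)}"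
proof (rule bij_betw_subset[OF I.bij_edges])
  show "fe ` {x \<in> pedges A.C. P (A.key x)} = {x \<in> pedges B.C. P (B.key x)}"
    using keys I.edge_in_image I.edge_preimage by fastforce
qed auto

lemma first_factor_iso:
  assumes keys: "\<And>x. x \<in> pedges A.C \<Longrightarrow> B.key (fe x) = A.key x"
  shows "pop_iso G1 G1'"
proof (rule pop_iso_from_encodings[OF A.progressive1 B.progressive1
      A.bij_betw_first_factor_edge B.bij_betw_first_factor_edge])
  show fe: "bij_betw fe A.first_factor_edges B.first_factor_edges"
    unfolding A.first_factor_edges_def B.first_factor_edges_def by (rule bij_betw_key_class[OF keys])
  fix x y assume x: "x \<in> A.first_factor_edges" and y: "y \<in> A.first_factor_edges"
  have x': "fe x \<in> B.first_factor_edges" and y': "fe y \<in> B.first_factor_edges"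
    using fe x y by (auto dest: bij_betwE)
  have C: "x \<in> pedges A.C" "y \<in> pedges A.C" using x y unfolding A.first_factor_edges_def by auto
  show "psrc G1' (first_factor_edge (fe x)) = psrc G1' (first_factor_edge (fe y)) \<longleftrightarrow>
      psrc G1 (first_factor_edge x) = psrc G1 (first_factor_edge y)"
    using A.first_factor_src_eq_iff[OF x y] B.first_factor_src_eq_iff[OF x' y'] I.src_eq_src_iff[OF C] by simp
  show "ptgt G1' (first_factor_edge (fe x)) = ptgt G1' (first_factor_edge (fe y)) \<longleftrightarrow>
      ptgt G1 (first_factor_edge x) = ptgt G1 (first_factor_edge y)"
    using A.first_factor_tgt_eq_iff[OF x y] B.first_factor_tgt_eq_iff[OF x' y'] I.tgt_eq_tgt_iff[OF C]
      I.edge_eq_iff[OF C] keys C by simp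
  show "ptgt G1' (first_factor_edge (fe x)) = psrc G1' (first_factor_edge (fe y)) \<longleftrightarrow>
      ptgt G1 (first_factor_edge x) = psrc G1 (first_factor_edge y)"
    using A.first_factor_tgt_src_iff[OF x y] B.first_factor_tgt_src_iff[OF x' y'] I.tgt_eq_src_iff[OF C]
      keys C by simp
  show "pprec G1' (first_factor_edge (fe x)) (first_factor_edge (fe y)) \<longleftrightarrow>
      pprec G1 (first_factor_edge x) (first_factor_edge y)"
    using A.first_factor_prec_iff[OF x y] B.first_factor_prec_iff[OF x' y'] I.prec_iff[OF C] by simp
qed

lemma second_factor_iso:
  assumes keys: "\<And>x. x \<in> pedges A.C \<Longrightarrow> B.key (fe x) = A.key x"
  shows "pop_iso G2 G2'"
proof (rule pop_iso_from_encodings[OF A.progressive2 B.progressive2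
      A.bij_betw_second_factor_edge B.bij_betw_second_factor_edge])
  show fe: "bij_betw fe A.second_factor_edges B.second_factor_edges"
    unfolding A.second_factor_edges_def B.second_factor_edges_def by (rule bij_betw_key_class[OF keys])
  fix x y assume x: "x \<in> A.second_factor_edges" and y: "y \<in> A.second_factor_edges"
  have x': "fe x \<in> B.second_factor_edges" and y': "fe y \<in> B.second_factor_edges"
    using fe x y by (auto dest: bij_betwE)
  have C: "x \<in> pedges A.C" "y \<in> pedges A.C" using x y unfolding A.second_factor_edges_def by auto
  show "psrc G2' (second_factor_edge (fe x)) = psrc G2' (second_factor_edge (fe y)) \<longleftrightarrow>
      psrc G2 (second_factor_edge x) = psrc G2 (second_factor_edge y)"
    using A.second_factor_src_eq_iff[OF x y] B.second_factor_src_eq_iff[OF x' y'] I.src_eq_src_iff[OF C]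
      I.edge_eq_iff[OF C] keys C by simp
  show "ptgt G2' (second_factor_edge (fe x)) = ptgt G2' (second_factor_edge (fe y)) \<longleftrightarrow>
      ptgt G2 (second_factor_edge x) = ptgt G2 (second_factor_edge y)"
    using A.second_factor_tgt_eq_iff[OF x y] B.second_factor_tgt_eq_iff[OF x' y'] I.tgt_eq_tgt_iff[OF C]
    by simp
  show "ptgt G2' (second_factor_edge (fe x)) = psrc G2' (second_factor_edge (fe y)) \<longleftrightarrow>
      ptgt G2 (second_factor_edge x) = psrc G2 (second_factor_edge y)"
    using A.second_factor_tgt_src_iff[OF x y] B.second_factor_tgt_src_iff[OF x' y'] I.tgt_eq_src_iff[OF C]
      keys C by simp
  show "pprec G2' (second_factor_edge (fe x)) (second_factor_edge (fe y)) \<longleftrightarrow>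
      pprec G2 (second_factor_edge x) (second_factor_edge y)"
    using A.second_factor_prec_iff[OF x y] B.second_factor_prec_iff[OF x' y'] I.prec_iff[OF C] by simp
qed

lemma keys_preserved_if_first_iso:
  assumes "pop_iso G1 G1'" and x: "x \<in> pedges A.C"
  shows "B.key (fe x) = A.key x"
proof -
  obtain gv ge where J: "pop_isomorphism G1 G1' gv ge"
    using pop_isoE[OF assms(1)] progressive_edge_ends[OF A.progressive1] by blast
  interpret J: pop_isomorphism G1 G1' gv ge by (fact J)
  have n: "B.n = A.n" by (rule J.card_outputs)
  have "card {x \<in> pedges A.C. A.key x = 3 * j} = card {x \<in> pedges B.C. B.key x = 3 * j}" for j
    unfolding A.lower_block_card B.lower_block_card
    using J.card_edge_set_eq[of "\<lambda>e. e \<notin> outputs G1' \<and> B.out_rank e = j"] J.output_iff J.output_rank_eq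
    by simp
  moreover have "block_order (pedges B.C) (pprec B.C) (reach B.C) B.key A.n"
    using B.blocks.block_order_axioms n by simp
  ultimately interpret K: block_order_iso "pedges A.C" "pprec A.C" "reach A.C" A.key
      "pedges B.C" "pprec B.C" "reach B.C" B.key A.n fe
    using A.blocks.block_order_axioms I.bij_edges I.prec_iff I.reach_iff
    by (intro block_order_iso.intro block_order_iso_axioms.intro) simp_all
  show ?thesis using K.key_preserved[OF x] .
qed

text \<open>Symmetrically, a given \<open>G\<^sub>2\<close> determines the keys when the blocks are counted from the end.\<close>

lemma keys_preserved_if_second_iso:
  assumes "pop_iso G2 G2'" and x: "x \<in> pedges A.C"
  shows "B.key (fe x) = A.key x"
proof -
  obtain gv ge where J: "pop_isomorphism G2 G2' gv ge"
    using pop_isoE[OF assms(1)] progressive_edge_ends[OF A.progressive2] by blast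
  interpret J: pop_isomorphism G2 G2' gv ge by (fact J)
  have n: "B.n = A.n" using J.card_inputs A.card_inputs B.card_inputs by simp
  have "card {x \<in> pedges A.C. 3 * A.n - 1 - A.key x = 3 * j} =
      card {x \<in> pedges B.C. 3 * A.n - 1 - B.key x = 3 * j}" for j
  proof (cases "j < A.n")
    case True
    then show ?thesis
      unfolding A.reversed_lower_block B.reversed_lower_block[unfolded n]
      using A.upper_block_card B.upper_block_card
        J.card_edge_set_eq[of "\<lambda>e. e \<notin> inputs G2' \<and> B.in_rank e - 1 = A.n - 1 - j"] J.input_iff J.input_rank_eq
      by simp
  next
    case False
    then show ?thesis unfolding A.reversed_lower_block B.reversed_lower_block[unfolded n] by simp
  qed
  moreover have "block_order (pedges B.C) (\<lambda>x y. pprec B.C y x) (\<lambda>x y. reach B.C y x)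
      (\<lambda>x. 3 * A.n - 1 - B.key x) A.n"
    using B.reversed_blocks.block_order_axioms n by simp
  ultimately interpret K: block_order_iso "pedges A.C" "\<lambda>x y. pprec A.C y x" "\<lambda>x y. reach A.C y x"
      "\<lambda>x. 3 * A.n - 1 - A.key x" "pedges B.C" "\<lambda>x y. pprec B.C y x" "\<lambda>x y. reach B.C y x"
      "\<lambda>x. 3 * A.n - 1 - B.key x" A.n fe
    using A.reversed_blocks.block_order_axioms I.bij_edges I.prec_iff I.reach_iff
    by (intro block_order_iso.intro block_order_iso_axioms.intro) simp_all
  have "3 * A.n - 1 - B.key (fe x) = 3 * A.n - 1 - A.key x" using K.key_preserved[OF x] .
  moreover have "B.key (fe x) < 3 * A.n" using B.key_less[OF I.edge_in_image[OF x]] n by simp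
  ultimately show ?thesis using reversed_key_arith(2)[OF _ A.key_less[OF x]] by blast
qed

end

theorem proposition2p3:
  fixes G1 :: "('v1, 'e1) pop" and G2 :: "('v2, 'e2) pop"
    and G1' :: "('v3, 'e3) pop" and G2' :: "('v4, 'e4) pop"
  assumes "pop_graph G1" and "pop_graph G2" and "pop_graph G1'" and "pop_graph G2'"
    and "composable G1 G2" and "composable G1' G2'"
    and "pop_iso (pop_comp G2 G1) (pop_comp G2' G1')"
  shows "(pop_iso G1 G1' \<longrightarrow> pop_iso G2 G2') \<and> (pop_iso G2 G2' \<longrightarrow> pop_iso G1 G1')"
proof -
  interpret A: composite G1 G2 using assms(1,2,5) by unfold_locales
  interpret B: composite G1' G2' using assms(3,4,6) by unfold_locales
  obtain fv fe where "pop_isomorphism (pop_comp G2 G1) (pop_comp G2' G1') fv fe"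
    using pop_isoE[OF assms(7) A.edge_ends] by blast
  then interpret composite_iso G1 G2 G1' G2' fv fe
    using A.composite_axioms B.composite_axioms by (intro composite_iso.intro)
  show ?thesis
    using first_factor_iso second_factor_iso keys_preserved_if_first_iso keys_preserved_if_second_iso
    by blast
qed

end
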